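(* In the setting below, for every nonempty $A\subseteq[n]$: \[ \Pr_{\psi\sim\Psi}\big(\exists q\in\mathbb Z,\ 0\le q\le q_{\max}:\ |Y_c(\psi,q)-|A||>\varepsilon|A|\big)\le\tfrac1{16}. \]
   Context: $[N]:=\{0,\dots,N-1\}$. Fix integers $n\ge1$ and real $0<\varepsilon<1$. Let $b:=2^{\lceil\log_2(9\cdot 2^{23}\varepsilon^{-2})\rceil}$ and $k:=\lceil\tfrac{15}{2}\ln b+16\rceil$. Hash families: for $d\ge1$, identify $[2^d]$ with $\mathrm{GF}(2^d)$ via binary representation. For $k'\ge1$, $N\le 2^d$, $c\le d$, $\mathcal H_{k'}([N],[2^c])$ is the uniform distribution over tuples $(a_0,\dots,a_{k'-1})\in\mathrm{GF}(2^d)^{k'}$, each giving $x\mapsto(\sum_ia_ix^i)\bmod 2^c$ on $[N]$; $\mathcal G_{k'}([N])$ is uniform over the same tuples giving $x\mapsto\mathrm{tz}(\sum_ia_ix^i)$, $\mathrm{tz}(y)$ = number of trailing zeros of the $d$-bit representation of $y$ ($\mathrm{tz}(0)=d$). Here $d$ is a fixed integer with $2^d\ge N$, $d\ge c$. $\Psi:=\mathcal G_2([n])\times\mathcal H_2([n],[2^5b^2])\times\mathcal H_k([2^5b^2],[b])$ with the uniform product distribution; $\psi=(f,g,h)$. For fixed nonempty $A\subseteq[n]$: $\tau_0(\psi)[j]:=\max(\{f(a):a\in A,\ h(g(a))=j\}\cup\{-1\})$ for $j\in[b]$; $\tau_1(\psi,q)[j]:=\max(\tau_0(\psi)[j]-q,-1)$;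 $t_c(\psi,q):=\max_{j\in[b]}(\tau_1(\psi,q)[j]+q)-\log_2b+9$; $s_c(\psi,q):=\max(0,t_c(\psi,q))$; $p_c(\psi,q):=|\{j\in[b]:\tau_1(\psi,q)[j]+q\ge s_c(\psi,q)\}|$; $\rho^{-1}(p):=\ln(1-p/b)/\ln(1-1/b)$ for $0\le p<b$; $Y_c(\psi,q):=2^{s_c(\psi,q)}\rho^{-1}(p_c(\psi,q))$, with $Y_c:=+\infty$ if $p_c=b$; $q_{\max}:=\max(0,\lceil\log_2|A|\rceil-\log_2b)$. *)

theory Defs
  imports "HOL-Library.Z2" "HOL-Computational_Algebra.Polynomial"
          "HOL-Probability.Probability"
begin

text \<open>An element x of [2^d] is identified with the GF(2)-polynomial whose
 i-th coefficient is the i-th bit of x; GF(2^d) = GF(2)[X]/(P) for an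
 irreducible P of degree d (the modulus is a parameter).\<close>

definition to_gf2poly :: "nat \<Rightarrow> bit poly" where
  "to_gf2poly x = Poly (map (\<lambda>i. if odd (x div 2 ^ i) then 1 else 0) [0..<Suc x])"

definition from_gf2poly :: "bit poly \<Rightarrow> nat" where
  "from_gf2poly p = (\<Sum>i\<le>degree p. if coeff p i = 1 then 2 ^ i else 0)"

definition gf_poly_eval :: "bit poly \<Rightarrow> nat list \<Rightarrow> nat \<Rightarrow> nat" where
  "gf_poly_eval P as x =
     from_gf2poly ((\<Sum>i<length as. to_gf2poly (as ! i) * to_gf2poly x ^ i) mod P)"

definition tz :: "nat \<Rightarrow> nat \<Rightarrow> nat" where
  "tz d y = (if y = 0 then d else (LEAST i. odd (y div 2 ^ i)))"

definition seeds :: "nat \<Rightarrow> nat \<Rightarrow> nat list set" where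
  "seeds d k' = {as. length as = k' \<and> set as \<subseteq> {..<2 ^ d}}"

definition hash_H :: "bit poly \<Rightarrow> nat \<Rightarrow> nat list \<Rightarrow> nat \<Rightarrow> nat" where
  "hash_H P c as x = gf_poly_eval P as x mod 2 ^ c"

definition hash_G :: "bit poly \<Rightarrow> nat \<Rightarrow> nat list \<Rightarrow> nat \<Rightarrow> nat" where
  "hash_G P d as x = tz d (gf_poly_eval P as x)"

definition b_exp :: "real \<Rightarrow> nat" where
  "b_exp \<epsilon> = nat \<lceil>log 2 (9 * 2 ^ 23 / \<epsilon>\<^sup>2)\<rceil>"

definition b_of :: "real \<Rightarrow> nat" where
  "b_of \<epsilon> = 2 ^ b_exp \<epsilon>"

definition k_of :: "real \<Rightarrow> nat" where
  "k_of \<epsilon> = nat \<lceil>15 / 2 * ln (real (b_of \<epsilon>)) + 16\<rceil>"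

text \<open>A seed psi = (f,g,h) given as hash functions.\<close>

definition tau0 :: "nat set \<Rightarrow> (nat \<Rightarrow> nat) \<Rightarrow> (nat \<Rightarrow> nat) \<Rightarrow> (nat \<Rightarrow> nat) \<Rightarrow> nat \<Rightarrow> int" where
  "tau0 A f g h j = Max ({int (f a) | a. a \<in> A \<and> h (g a) = j} \<union> {-1})"

definition tau1 :: "nat set \<Rightarrow> (nat \<Rightarrow> nat) \<Rightarrow> (nat \<Rightarrow> nat) \<Rightarrow> (nat \<Rightarrow> nat) \<Rightarrow> int \<Rightarrow> nat \<Rightarrow> int" where
  "tau1 A f g h q j = max (tau0 A f g h j - q) (-1)"

definition t_c :: "nat \<Rightarrow> nat set \<Rightarrow> (nat \<Rightarrow> nat) \<Rightarrow> (nat \<Rightarrow> nat) \<Rightarrow> (nat \<Rightarrow> nat) \<Rightarrow> int \<Rightarrow> real" where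
  "t_c b A f g h q = real_of_int (Max ((\<lambda>j. tau1 A f g h q j + q) ` {..<b})) - log 2 (real b) + 9"

definition s_c :: "nat \<Rightarrow> nat set \<Rightarrow> (nat \<Rightarrow> nat) \<Rightarrow> (nat \<Rightarrow> nat) \<Rightarrow> (nat \<Rightarrow> nat) \<Rightarrow> int \<Rightarrow> real" where
  "s_c b A f g h q = max 0 (t_c b A f g h q)"

definition p_c :: "nat \<Rightarrow> nat set \<Rightarrow> (nat \<Rightarrow> nat) \<Rightarrow> (nat \<Rightarrow> nat) \<Rightarrow> (nat \<Rightarrow> nat) \<Rightarrow> int \<Rightarrow> nat" where
  "p_c b A f g h q = card {j \<in> {..<b}. real_of_int (tau1 A f g h q j + q) \<ge> s_c b A f g h q}"

definition rho_inv :: "nat \<Rightarrow> real \<Rightarrow> real" where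
  "rho_inv b p = ln (1 - p / real b) / ln (1 - 1 / real b)"

definition Y_c :: "nat \<Rightarrow> nat set \<Rightarrow> (nat \<Rightarrow> nat) \<Rightarrow> (nat \<Rightarrow> nat) \<Rightarrow> (nat \<Rightarrow> nat) \<Rightarrow> int \<Rightarrow> ereal" where
  "Y_c b A f g h q =
     (if p_c b A f g h q = b then \<infinity>
      else ereal (2 powr s_c b A f g h q * rho_inv b (real (p_c b A f g h q))))"

definition q_max :: "nat \<Rightarrow> nat set \<Rightarrow> int" where
  "q_max b A = max 0 (\<lceil>log 2 (real (card A))\<rceil> - \<lfloor>log 2 (real b)\<rfloor>)"

end

(*
  Fix a seed (f, g, h), let M = max f(A) and s = M - log b + 9. For every admissible q the cutoff
  of the estimator is s, and it counts the number p of bins that h o g hits on the level set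
  A_s = {a in A. s <= f a}; so it returns 2^s rho_inv(p). Hence it is accurate as soon as
  (1) M is within 6 of ceil(log |A|), (2) every level set up to the top one has size within
  eps/3 of |A| / 2^s, (3) g is injective on the relevant level sets and (4) the number of bins
  hit by h is within eps/3 of its mean rho(|A_s|).

  Pairwise independence of f gives (1) and (2) by Chebyshev's inequality, pairwise independence
  of g gives (3) by a union bound over pairs. For (4), k-wise independence of h fixes the first k
  binomial moments of every bin load; by the Bonferroni inequalities the number of empty bins then
  has almost the mean and variance of the fully random case, and Chebyshev applies again.
*)

theory Submission
  imports Defs "HOL-Computational_Algebra.Polynomial_Factorial"
begin

section \<open>Binary representation of field elements\<close>

lemma coeff_to_gf2poly: "coeff (to_gf2poly x) i = (if odd (x div 2 ^ i) then 1 else 0)"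
proof (cases "i \<le> x")
  case True
  then show ?thesis by (simp add: to_gf2poly_def nth_default_def)
next
  case False
  then have "x < 2 ^ i"
    using less_exp[of i] by linarith
  then show ?thesis using False by (simp add: to_gf2poly_def nth_default_def)
qed

lemma coeff_to_gf2poly_bit: "coeff (to_gf2poly x) i = (if bit x i then 1 else 0)"
  by (simp add: coeff_to_gf2poly bit_iff_odd)

lemma to_gf2poly_eq_iff: "to_gf2poly x = to_gf2poly y \<longleftrightarrow> x = y"
proof
  assume eq: "to_gf2poly x = to_gf2poly y"
  have "bit x n = bit y n" for n
    using arg_cong[OF eq, of "\<lambda>p. coeff p n"] by (auto simp: coeff_to_gf2poly_bit split: if_splits)
  then show "x = y" by (simp add: bit_eq_iff)
qed simp

lemma degree_to_gf2poly_less: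
  assumes "x < 2 ^ d" "d \<ge> 1"
  shows "degree (to_gf2poly x) < d"
proof -
  have "coeff (to_gf2poly x) i = 0" if "i > d - 1" for i
  proof -
    have "(2::nat) ^ d \<le> 2 ^ i" using assms that by (intro power_increasing) auto
    then have "x < 2 ^ i" using assms by linarith
    then show ?thesis by (simp add: coeff_to_gf2poly)
  qed
  then have "degree (to_gf2poly x) \<le> d - 1" by (intro degree_le) auto
  then show ?thesis using assms by linarith
qed

lemma from_gf2poly_eq_horner_sum:
  assumes "degree p < d"
  shows "from_gf2poly p = horner_sum of_bool 2 (map (\<lambda>i. coeff p i = 1) [0..<d])"
proof -
  have "from_gf2poly p = (\<Sum>i<d. if coeff p i = 1 then 2 ^ i else 0)"
    unfolding from_gf2poly_def
    by (rule sum.mono_neutral_left) (use assms in \<open>auto simp: coeff_eq_0\<close>)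
  also have "\<dots> = horner_sum of_bool 2 (map (\<lambda>i. coeff p i = 1) [0..<d])"
    unfolding horner_sum_eq_sum by (intro sum.cong) (auto simp: atLeast0LessThan)
  finally show ?thesis .
qed

lemma from_gf2poly_less: "degree p < d \<Longrightarrow> from_gf2poly p < 2 ^ d"
  using horner_sum_bound[of "map (\<lambda>i. coeff p i = 1) [0..<d]"]
  by (simp add: from_gf2poly_eq_horner_sum)

lemma to_gf2poly_from_gf2poly: "to_gf2poly (from_gf2poly p) = p"
proof (rule poly_eqI)
  fix n
  have deg: "degree p < Suc (degree p)" by simp
  have "bit (from_gf2poly p) n \<longleftrightarrow> n < Suc (degree p) \<and> coeff p n = 1"
    by (cases "n < Suc (degree p)")
      (simp_all add: from_gf2poly_eq_horner_sum[OF deg] bit_horner_sum_bit_iff del: upt_Suc)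
  moreover have "n \<ge> Suc (degree p) \<Longrightarrow> coeff p n = 0" by (simp add: coeff_eq_0)
  ultimately show "coeff (to_gf2poly (from_gf2poly p)) n = coeff p n"
    by (cases "n < Suc (degree p)") (auto simp: coeff_to_gf2poly_bit simp del: upt_Suc)
qed

lemma irreducible_degree_ge_1:
  fixes P :: "'a::field poly"
  assumes "irreducible P"
  shows "degree P \<ge> 1"
proof (rule ccontr)
  assume "\<not> degree P \<ge> 1"
  moreover have "P \<noteq> 0" using assms by auto
  ultimately have "is_unit P" by (simp add: is_unit_iff_degree)
  then show False using assms by (simp add: irreducible_def)
qed

lemma to_gf2poly_eq_if_dvd_diff:
  assumes "degree P = d" "P \<noteq> 0" "d \<ge> 1" "x < 2 ^ d" "y < 2 ^ d"
    and "P dvd to_gf2poly x - to_gf2poly y"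
  shows "x = y"
proof (rule ccontr)
  assume "x \<noteq> y"
  then have "to_gf2poly x - to_gf2poly y \<noteq> 0" by (simp add: to_gf2poly_eq_iff)
  moreover have "degree (to_gf2poly x - to_gf2poly y) < d"
    using degree_diff_le_max[of "to_gf2poly x" "to_gf2poly y"] assms
      degree_to_gf2poly_less[of x d] degree_to_gf2poly_less[of y d] by linarith
  ultimately show False using dvd_imp_degree_le[OF assms(6)] assms(1) by simp
qed

lemma gf_poly_eval_less:
  assumes "irreducible P" "degree P = d"
  shows "gf_poly_eval P as x < 2 ^ d"
proof -
  have "P \<noteq> 0" using assms by auto
  have "from_gf2poly (S mod P) < 2 ^ d" for S
  proof (cases "S mod P = 0")
    case False
    then show ?thesis using degree_mod_less[OF \<open>P \<noteq> 0\<close>, of S] assms by (simp add: from_gf2poly_less)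
  qed (simp add: from_gf2poly_def)
  then show ?thesis unfolding gf_poly_eval_def .
qed

lemma poly_Poly_eq_sum: "poly (Poly cs) (y::'a::comm_ring_1) = (\<Sum>i<length cs. cs ! i * y ^ i)"
proof (induction cs)
  case (Cons c cs)
  then show ?case
    by (simp add: sum.lessThan_Suc_shift sum_distrib_left ac_simps del: sum.lessThan_Suc)
qed simp

lemma gf_poly_eval_eq_poly:
  "gf_poly_eval P as x = from_gf2poly (poly (Poly (map to_gf2poly as)) (to_gf2poly x) mod P)"
  unfolding gf_poly_eval_def poly_Poly_eq_sum by simp


section \<open>Uniform probability on a finite set\<close>

definition unif_prob :: "'a set \<Rightarrow> ('a \<Rightarrow> bool) \<Rightarrow> real" where
  "unif_prob \<Omega> P = real (card {x \<in> \<Omega>. P x}) / real (card \<Omega>)"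

definition unif_expect :: "'a set \<Rightarrow> ('a \<Rightarrow> real) \<Rightarrow> real" where
  "unif_expect \<Omega> X = (\<Sum>x\<in>\<Omega>. X x) / real (card \<Omega>)"

lemma unif_prob_eq_measure_pmf_of_set:
  assumes "finite \<Omega>" "\<Omega> \<noteq> {}"
  shows "measure_pmf.prob (pmf_of_set \<Omega>) E = unif_prob \<Omega> (\<lambda>x. x \<in> E)"
  unfolding measure_pmf_of_set[OF assms(2,1)] unif_prob_def by (simp add: Int_def)

lemma real_card_filter_eq_sum: "finite A \<Longrightarrow> real (card {x\<in>A. P x}) = (\<Sum>x\<in>A. of_bool (P x))"
  by (simp add: of_bool_def sum.If_cases Int_def conj_commute)

lemma unif_prob_eq_expect:
  "finite \<Omega> \<Longrightarrow> unif_prob \<Omega> P = unif_expect \<Omega> (\<lambda>x. of_bool (P x))"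
  unfolding unif_prob_def unif_expect_def by (simp add: real_card_filter_eq_sum)

lemma unif_prob_mono:
  assumes "finite \<Omega>" "\<And>x. x \<in> \<Omega> \<Longrightarrow> P x \<Longrightarrow> Q x"
  shows "unif_prob \<Omega> P \<le> unif_prob \<Omega> Q"
proof -
  have "card {x \<in> \<Omega>. P x} \<le> card {x \<in> \<Omega>. Q x}" using assms by (intro card_mono) auto
  then show ?thesis unfolding unif_prob_def by (simp add: divide_right_mono)
qed

lemma unif_prob_cong: "(\<And>x. x \<in> \<Omega> \<Longrightarrow> P x = Q x) \<Longrightarrow> unif_prob \<Omega> P = unif_prob \<Omega> Q"
  unfolding unif_prob_def by (metis (mono_tags, lifting) Collect_cong)

lemma unif_prob_False [simp]: "unif_prob \<Omega> (\<lambda>x. False) = 0"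
  unfolding unif_prob_def by simp

lemma unif_prob_disj_le:
  assumes "finite \<Omega>"
  shows "unif_prob \<Omega> (\<lambda>x. P x \<or> Q x) \<le> unif_prob \<Omega> P + unif_prob \<Omega> Q"
proof -
  have "{x \<in> \<Omega>. P x \<or> Q x} = {x \<in> \<Omega>. P x} \<union> {x \<in> \<Omega>. Q x}" by auto
  then have "card {x \<in> \<Omega>. P x \<or> Q x} \<le> card {x \<in> \<Omega>. P x} + card {x \<in> \<Omega>. Q x}"
    by (simp add: card_Un_le)
  then show ?thesis
    unfolding unif_prob_def by (simp add: add_divide_distrib[symmetric] divide_right_mono)
qed

lemma unif_prob_union_bound:
  assumes "finite \<Omega>" "finite I"
  shows "unif_prob \<Omega> (\<lambda>x. \<exists>i\<in>I. P i x) \<le> (\<Sum>i\<in>I. unif_prob \<Omega> (P i))"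
  using assms(2)
proof (induction I rule: finite_induct)
  case (insert i I)
  have "unif_prob \<Omega> (\<lambda>x. \<exists>j\<in>insert i I. P j x)
      \<le> unif_prob \<Omega> (P i) + unif_prob \<Omega> (\<lambda>x. \<exists>j\<in>I. P j x)"
    using unif_prob_disj_le[OF assms(1)] by simp
  then show ?case using insert by simp
qed simp

lemma unif_prob_disjoint_union:
  assumes "finite \<Omega>" "finite I"
    and "\<And>i j x. i \<in> I \<Longrightarrow> j \<in> I \<Longrightarrow> x \<in> \<Omega> \<Longrightarrow> P i x \<Longrightarrow> P j x \<Longrightarrow> i = j"
  shows "unif_prob \<Omega> (\<lambda>x. \<exists>i\<in>I. P i x) = (\<Sum>i\<in>I. unif_prob \<Omega> (P i))"
proof -
  have "{x \<in> \<Omega>. \<exists>i\<in>I. P i x} = (\<Union>i\<in>I. {x \<in> \<Omega>. P i x})" by auto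
  then have "card {x \<in> \<Omega>. \<exists>i\<in>I. P i x} = (\<Sum>i\<in>I. card {x \<in> \<Omega>. P i x})"
    using assms by (auto intro!: card_UN_disjoint)
  then show ?thesis unfolding unif_prob_def by (simp add: sum_divide_distrib)
qed

lemma unif_expect_add: "unif_expect \<Omega> (\<lambda>x. X x + Y x) = unif_expect \<Omega> X + unif_expect \<Omega> Y"
  unfolding unif_expect_def by (simp add: sum.distrib add_divide_distrib)

lemma unif_expect_diff: "unif_expect \<Omega> (\<lambda>x. X x - Y x) = unif_expect \<Omega> X - unif_expect \<Omega> Y"
  unfolding unif_expect_def by (simp add: sum_subtractf diff_divide_distrib)

lemma unif_expect_cmult: "unif_expect \<Omega> (\<lambda>x. c * X x) = c * unif_expect \<Omega> X"
  unfolding unif_expect_def by (simp add: sum_distrib_left)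

lemma unif_expect_const: "finite \<Omega> \<Longrightarrow> \<Omega> \<noteq> {} \<Longrightarrow> unif_expect \<Omega> (\<lambda>x. c) = c"
  unfolding unif_expect_def by simp

lemma unif_expect_sum: "unif_expect \<Omega> (\<lambda>x. \<Sum>i\<in>I. X i x) = (\<Sum>i\<in>I. unif_expect \<Omega> (X i))"
  unfolding unif_expect_def by (simp add: sum.swap[of _ I] sum_divide_distrib)

lemma unif_expect_mono:
  "(\<And>x. x \<in> \<Omega> \<Longrightarrow> X x \<le> Y x) \<Longrightarrow> unif_expect \<Omega> X \<le> unif_expect \<Omega> Y"
  unfolding unif_expect_def by (intro divide_right_mono sum_mono) auto

lemma unif_expect_cong:
  "(\<And>x. x \<in> \<Omega> \<Longrightarrow> X x = Y x) \<Longrightarrow> unif_expect \<Omega> X = unif_expect \<Omega> Y"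
  unfolding unif_expect_def by (metis sum.cong)

lemma unif_expect_nonneg: "(\<And>x. x \<in> \<Omega> \<Longrightarrow> X x \<ge> 0) \<Longrightarrow> unif_expect \<Omega> X \<ge> 0"
  unfolding unif_expect_def by (intro divide_nonneg_nonneg sum_nonneg) auto

lemma unif_expect_variance:
  assumes "finite \<Omega>" "\<Omega> \<noteq> {}"
  shows "unif_expect \<Omega> (\<lambda>x. (X x - unif_expect \<Omega> X)^2)
       = unif_expect \<Omega> (\<lambda>x. (X x)^2) - (unif_expect \<Omega> X)^2"
proof -
  have "unif_expect \<Omega> (\<lambda>x. (X x - unif_expect \<Omega> X)^2)
      = unif_expect \<Omega> (\<lambda>x. (X x)^2 - 2 * unif_expect \<Omega> X * X x + (unif_expect \<Omega> X)^2)"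
    by (intro unif_expect_cong) (simp add: power2_eq_square algebra_simps)
  also have "\<dots> = unif_expect \<Omega> (\<lambda>x. (X x)^2) - 2 * unif_expect \<Omega> X * unif_expect \<Omega> X + (unif_expect \<Omega> X)^2"
    by (simp add: unif_expect_add unif_expect_diff unif_expect_cmult unif_expect_const assms)
  finally show ?thesis by (simp add: power2_eq_square)
qed

lemma unif_prob_markov:
  assumes "finite \<Omega>" "\<And>x. x \<in> \<Omega> \<Longrightarrow> X x \<ge> 0" "t > 0"
  shows "unif_prob \<Omega> (\<lambda>x. X x \<ge> t) \<le> unif_expect \<Omega> X / t"
proof -
  have "unif_prob \<Omega> (\<lambda>x. X x \<ge> t) \<le> unif_expect \<Omega> (\<lambda>x. 1 / t * X x)"
    unfolding unif_prob_eq_expect[OF assms(1)] using assms by (intro unif_expect_mono) auto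
  also have "\<dots> = unif_expect \<Omega> X / t" by (simp only: unif_expect_cmult) simp
  finally show ?thesis .
qed

lemma unif_prob_chebyshev:
  assumes "finite \<Omega>" "t > 0"
  shows "unif_prob \<Omega> (\<lambda>x. \<bar>X x - c\<bar> \<ge> t) \<le> unif_expect \<Omega> (\<lambda>x. (X x - c)^2) / t^2"
proof -
  have "unif_prob \<Omega> (\<lambda>x. \<bar>X x - c\<bar> \<ge> t) = unif_prob \<Omega> (\<lambda>x. (X x - c)^2 \<ge> t^2)"
    using assms(2) by (intro unif_prob_cong) (metis abs_ge_zero abs_le_square_iff abs_of_pos power2_abs)
  also have "\<dots> \<le> unif_expect \<Omega> (\<lambda>x. (X x - c)^2) / t^2"
    using assms by (intro unif_prob_markov) auto
  finally show ?thesis .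
qed

lemma unif_prob_times:
  assumes "finite A" "finite B"
  shows "unif_prob (A \<times> B) (\<lambda>(a, b). P a \<and> Q b) = unif_prob A P * unif_prob B Q"
proof -
  have "{x \<in> A \<times> B. case x of (a, b) \<Rightarrow> P a \<and> Q b} = {a \<in> A. P a} \<times> {b \<in> B. Q b}" by auto
  then show ?thesis unfolding unif_prob_def by (simp add: card_cartesian_product)
qed

lemma unif_prob_fst:
  assumes "finite B" "B \<noteq> {}"
  shows "unif_prob (A \<times> B) (\<lambda>x. P (fst x)) = unif_prob A P"
proof -
  have "{x \<in> A \<times> B. P (fst x)} = {a \<in> A. P a} \<times> B" by auto
  then show ?thesis unfolding unif_prob_def using assms by (simp add: card_cartesian_product)
qed

lemma unif_prob_fst_fst_snd:
  fixes A :: "'a set" and B :: "'b set" and C :: "'c set"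
  assumes "finite C" "C \<noteq> {}"
  shows "unif_prob (A \<times> B \<times> C) (\<lambda>x. P (fst x) (fst (snd x))) = unif_prob (A \<times> B) (\<lambda>x. P (fst x) (snd x))"
proof -
  define assoc where "assoc = (\<lambda>(ab :: 'a \<times> 'b, c :: 'c). (fst ab, snd ab, c))"
  have "{x \<in> A \<times> B \<times> C. P (fst x) (fst (snd x))} = assoc ` ({x \<in> A \<times> B. P (fst x) (snd x)} \<times> C)"
    unfolding assoc_def by (auto simp: image_iff)
  moreover have "inj_on assoc ({x \<in> A \<times> B. P (fst x) (snd x)} \<times> C)"
    unfolding assoc_def by (auto simp: inj_on_def)
  ultimately have "card {x \<in> A \<times> B \<times> C. P (fst x) (fst (snd x))} = card {x \<in> A \<times> B. P (fst x) (snd x)} * card C"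
    by (simp add: card_image card_cartesian_product)
  then show ?thesis unfolding unif_prob_def using assms by (simp add: card_cartesian_product)
qed

lemma unif_prob_le_if_sections_le:
  assumes "finite A" "finite B" "A \<noteq> {}"
    and "\<And>a. a \<in> A \<Longrightarrow> unif_prob B (\<lambda>b. Q (a, b)) \<le> c"
  shows "unif_prob (A \<times> B) Q \<le> c"
proof -
  have "{x \<in> A \<times> B. Q x} = Sigma A (\<lambda>a. {b \<in> B. Q (a, b)})" by auto
  then have "card {x \<in> A \<times> B. Q x} = (\<Sum>a\<in>A. card {b \<in> B. Q (a, b)})"
    using assms by (simp add: card_SigmaI)
  then have "unif_prob (A \<times> B) Q = (\<Sum>a\<in>A. unif_prob B (\<lambda>b. Q (a, b))) / card A"
    unfolding unif_prob_def using assms by (simp add: card_cartesian_product sum_divide_distrib ac_simps)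
  also have "\<dots> \<le> (\<Sum>a\<in>A. c) / card A"
    using assms by (intro divide_right_mono sum_mono) auto
  also have "\<dots> = c" using assms by simp
  finally show ?thesis .
qed

section \<open>Counting seeds of the polynomial hash families\<close>

lemma prime_dvd_coeff_if_dvd_poly_at_points:
  fixes Q :: "'a::idom poly" and P :: 'a
  assumes "prime_elem P" and "distinct ys"
    and "\<And>y y'. y \<in> set ys \<Longrightarrow> y' \<in> set ys \<Longrightarrow> y \<noteq> y' \<Longrightarrow> \<not> P dvd (y - y')"
    and "\<And>y. y \<in> set ys \<Longrightarrow> P dvd poly Q y"
    and "degree Q < length ys"
  shows "P dvd coeff Q i"
  using assms(2-5)
proof (induction ys arbitrary: Q i)
  case Nil then show ?case by simp
next
  case (Cons y ys)
  define R where "R = synthetic_div Q y"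
  have QR: "Q + smult y R = pCons (poly Q y) R" unfolding R_def by (rule synthetic_div_correct)
  have coeff_Q: "coeff Q i = coeff (pCons (poly Q y) R) i - y * coeff R i" for i
    using arg_cong[OF QR, of "\<lambda>p. coeff p i"] by (simp add: algebra_simps)
  have P_y: "P dvd poly Q y" using Cons.prems by simp
  have P_R: "P dvd coeff R j" for j
  proof (cases "ys = []")
    case True
    then have "R = 0" using Cons.prems by (simp add: R_def synthetic_div_eq_0_iff)
    then show ?thesis by simp
  next
    case False
    show ?thesis
    proof (rule Cons.IH)
      show "distinct ys" using Cons.prems by simp
      show "\<not> P dvd (a - a')" if "a \<in> set ys" "a' \<in> set ys" "a \<noteq> a'" for a a'
        using Cons.prems(2) that by simp
      have "length ys \<noteq> 0" "degree Q < Suc (length ys)" using False Cons.prems(4) by simp_all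
      then show "degree R < length ys" unfolding R_def degree_synthetic_div by linarith
      fix z assume z: "z \<in> set ys"
      have "poly Q z + y * poly R z = poly Q y + z * poly R z"
        using arg_cong[OF QR, of "\<lambda>p. poly p z"] by simp
      then have "poly Q z - poly Q y = (z - y) * poly R z" by (simp add: algebra_simps)
      moreover have "P dvd poly Q z - poly Q y" using Cons.prems z P_y by (simp add: dvd_diff)
      moreover have "\<not> P dvd (z - y)" using Cons.prems(1,2) z by auto
      ultimately show "P dvd poly R z" using prime_elem_dvd_mult_iff[OF assms(1)] by auto
    qed
  qed
  show ?case
  proof (cases i)
    case 0 then show ?thesis using coeff_Q[of 0] P_y P_R[of 0] by (simp add: dvd_diff)
  next
    case (Suc j) then show ?thesis using coeff_Q[of i] P_R[of j] P_R[of i] by (simp add: dvd_diff)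
  qed
qed


lemma gf_poly_eval_inj_on_low_coeffs:
  assumes irr: "irreducible P" and deg: "degree P = d" and dist: "distinct xs"
    and xs: "set xs \<subseteq> {..<2 ^ d}" and len: "length xs = m"
  shows "inj_on (\<lambda>low. map (gf_poly_eval P (low @ tail)) xs) (seeds d m)"
proof (rule inj_onI)
  fix l1 l2 assume l1: "l1 \<in> seeds d m" and l2: "l2 \<in> seeds d m"
    and eq: "map (gf_poly_eval P (l1 @ tail)) xs = map (gf_poly_eval P (l2 @ tail)) xs"
  have "P \<noteq> 0" "d \<ge> 1" using irr deg irreducible_degree_ge_1 by auto
  have l12: "length l1 = m" "length l2 = m" "set l1 \<subseteq> {..<2 ^ d}" "set l2 \<subseteq> {..<2 ^ d}"
    using l1 l2 by (auto simp: seeds_def)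
  define Q where "Q = Poly (map to_gf2poly (l1 @ tail)) - Poly (map to_gf2poly (l2 @ tail))"
  have coeff_Q: "coeff Q i = (if i < m then to_gf2poly (l1 ! i) - to_gf2poly (l2 ! i) else 0)" for i
    unfolding Q_def coeff_diff coeff_Poly_eq nth_default_def using l12 by (auto simp: nth_append)
  show "l1 = l2"
  proof (cases "m = 0")
    case False
    have "degree Q \<le> m - 1" by (rule degree_le) (use False in \<open>auto simp: coeff_Q\<close>)
    then have "degree Q < length (map to_gf2poly xs)" using False len by simp
    then have P_dvd_coeff: "P dvd coeff Q i" for i
    proof (rule prime_dvd_coeff_if_dvd_poly_at_points[rotated 4])
      show "prime_elem P" using irr by (rule field_poly_irreducible_imp_prime)
      show "distinct (map to_gf2poly xs)"
        using dist by (simp add: distinct_map inj_on_def to_gf2poly_eq_iff)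
      show "\<not> P dvd (y - y')"
        if "y \<in> set (map to_gf2poly xs)" "y' \<in> set (map to_gf2poly xs)" "y \<noteq> y'" for y y'
        using that xs to_gf2poly_eq_if_dvd_diff[OF deg \<open>P \<noteq> 0\<close> \<open>d \<ge> 1\<close>] by auto
      show "P dvd poly Q y" if y: "y \<in> set (map to_gf2poly xs)" for y
      proof -
        obtain x where x: "x \<in> set xs" "y = to_gf2poly x" using y by auto
        then have "gf_poly_eval P (l1 @ tail) x = gf_poly_eval P (l2 @ tail) x"
          using eq by simp
        then have "poly (Poly (map to_gf2poly (l1 @ tail))) y mod P
            = poly (Poly (map to_gf2poly (l2 @ tail))) y mod P"
          unfolding gf_poly_eval_eq_poly x(2) by (metis to_gf2poly_from_gf2poly)
        then show ?thesis unfolding Q_def poly_diff by (simp add: mod_eq_dvd_iff)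
      qed
    qed
    show ?thesis
    proof (rule nth_equalityI)
      fix i assume "i < length l1"
      then show "l1 ! i = l2 ! i"
        using P_dvd_coeff[of i] l12 to_gf2poly_eq_if_dvd_diff[OF deg \<open>P \<noteq> 0\<close> \<open>d \<ge> 1\<close>]
        by (auto simp: coeff_Q subset_iff)
    qed (use l12 in simp)
  qed (use l12 in simp)
qed

lemma seeds_eq_lists: "seeds d k = {xs. set xs \<subseteq> {..<2 ^ d} \<and> length xs = k}"
  by (auto simp: seeds_def)

lemma card_seeds: "card (seeds d k) = 2 ^ (d * k)"
  unfolding seeds_eq_lists by (simp add: card_lists_length_eq power_mult)

lemma finite_seeds: "finite (seeds d k)"
  unfolding seeds_eq_lists by (simp add: finite_lists_length_eq)

lemma seeds_nonempty: "seeds d k \<noteq> {}"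
  using card_seeds[of d k] by (metis card.empty power_not_zero zero_neq_numeral)

lemma in_listset_iff: "ys \<in> listset Bs \<longleftrightarrow> length ys = length Bs \<and> (\<forall>i<length Bs. ys ! i \<in> Bs ! i)"
proof (induction Bs arbitrary: ys)
  case (Cons B Bs)
  then show ?case
    by (cases ys) (auto simp: set_Cons_def nth_Cons less_Suc_eq_0_disj split: nat.splits)
qed simp

lemma card_listset: "card (listset Bs) = (\<Prod>i<length Bs. card (Bs ! i))"
proof (induction Bs)
  case (Cons B Bs)
  have "listset (B # Bs) = (\<lambda>(y, ys). y # ys) ` (B \<times> listset Bs)"
    by (auto simp: set_Cons_def)
  moreover have "inj_on (\<lambda>(y, ys). y # ys) (B \<times> listset Bs)" by (auto simp: inj_on_def)
  ultimately have "card (listset (B # Bs)) = card B * card (listset Bs)"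
    by (simp add: card_image card_cartesian_product)
  then show ?case using Cons by (simp add: prod.lessThan_Suc_shift del: prod.lessThan_Suc)
qed simp

text \<open>Fixing all but the lowest \<open>m\<close> coefficients, evaluation at \<open>m\<close> distinct points is
  a bijection of \<open>seeds d m\<close>, so the values at these points are exactly uniform.\<close>

lemma card_low_coeffs_eval_in:
  assumes irr: "irreducible P" and deg: "degree P = d" and dist: "distinct xs"
    and xs: "set xs \<subseteq> {..<2 ^ d}" and len: "length xs = m"
    and Bs: "length Bs = m" "\<forall>B\<in>set Bs. B \<subseteq> {..<2 ^ d}"
  shows "card {low \<in> seeds d m. \<forall>i<m. gf_poly_eval P (low @ tail) (xs ! i) \<in> Bs ! i}
      = (\<Prod>i<m. card (Bs ! i))"
proof -
  define E where "E = (\<lambda>low. map (gf_poly_eval P (low @ tail)) xs)"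
  have inj: "inj_on E (seeds d m)"
    unfolding E_def by (rule gf_poly_eval_inj_on_low_coeffs[OF irr deg dist xs len])
  have "E ` seeds d m \<subseteq> seeds d m"
    using gf_poly_eval_less[OF irr deg] len by (auto simp: E_def seeds_def)
  then have E_onto: "E ` seeds d m = seeds d m"
    using inj finite_seeds by (metis card_image card_subset_eq)
  have "listset Bs \<subseteq> seeds d m"
    using Bs by (auto simp: in_listset_iff seeds_def set_conv_nth subset_iff)
  then have "E ` {low \<in> seeds d m. E low \<in> listset Bs} = listset Bs"
    using E_onto by (auto simp: image_iff)
  moreover have "{low \<in> seeds d m. \<forall>i<m. gf_poly_eval P (low @ tail) (xs ! i) \<in> Bs ! i}
      = {low \<in> seeds d m. E low \<in> listset Bs}"
    using len Bs by (auto simp: E_def in_listset_iff)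
  moreover have "inj_on E {low \<in> seeds d m. E low \<in> listset Bs}"
    using inj by (rule inj_on_subset) auto
  ultimately show ?thesis using card_listset[of Bs] Bs(1) card_image by metis
qed

lemma card_seeds_eval_in:
  assumes irr: "irreducible P" and deg: "degree P = d" and dist: "distinct xs"
    and xs: "set xs \<subseteq> {..<2 ^ d}" and len: "length xs = m" and "m \<le> k"
    and Bs: "length Bs = m" "\<forall>B\<in>set Bs. B \<subseteq> {..<2 ^ d}"
  shows "card {as \<in> seeds d k. \<forall>i<m. gf_poly_eval P as (xs ! i) \<in> Bs ! i}
      = (\<Prod>i<m. card (Bs ! i)) * 2 ^ (d * (k - m))"
proof -
  define good where "good = (\<lambda>as. \<forall>i<m. gf_poly_eval P as (xs ! i) \<in> Bs ! i)"
  define S where "S = Sigma (seeds d (k - m)) (\<lambda>t. {l \<in> seeds d m. good (l @ t)})"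
  have inj: "inj_on (\<lambda>(t, l). l @ t) S" unfolding S_def by (auto simp: inj_on_def seeds_def)
  have image: "(\<lambda>(t, l). l @ t) ` S = {as \<in> seeds d k. good as}"
  proof (intro equalityI subsetI)
    fix as assume "as \<in> (\<lambda>(t, l). l @ t) ` S"
    then show "as \<in> {as \<in> seeds d k. good as}" using \<open>m \<le> k\<close> unfolding S_def by (auto simp: seeds_def)
  next
    fix as assume "as \<in> {as \<in> seeds d k. good as}"
    then have "(drop m as, take m as) \<in> S" using \<open>m \<le> k\<close> unfolding S_def
      by (auto simp: seeds_def dest: in_set_dropD in_set_takeD)
    then show "as \<in> (\<lambda>(t, l). l @ t) ` S" by (auto intro!: image_eqI[where x="(drop m as, take m as)"])
  qed
  have "card {as \<in> seeds d k. good as} = card S" using inj image by (metis card_image)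
  also have "\<dots> = (\<Sum>t\<in>seeds d (k - m). card {l \<in> seeds d m. good (l @ t)})"
    unfolding S_def by (rule card_SigmaI) (auto simp: finite_seeds)
  also have "\<dots> = (\<Sum>t\<in>seeds d (k - m). (\<Prod>i<m. card (Bs ! i)))"
    unfolding good_def by (intro sum.cong refl card_low_coeffs_eval_in[OF irr deg dist xs len Bs])
  finally show ?thesis by (simp add: good_def card_seeds)
qed

lemma unif_prob_seeds_eval_in:
  assumes "irreducible P" "degree P = d" "distinct xs"
    and "set xs \<subseteq> {..<2 ^ d}" "length xs = m" "m \<le> k"
    and "length Bs = m" "\<forall>B\<in>set Bs. B \<subseteq> {..<2 ^ d}"
  shows "unif_prob (seeds d k) (\<lambda>as. \<forall>i<m. gf_poly_eval P as (xs ! i) \<in> Bs ! i)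
       = (\<Prod>i<m. real (card (Bs ! i)) / 2 ^ d)"
proof -
  have "(2::real) ^ (d * k) = 2 ^ (d * (k - m)) * 2 ^ (d * m)"
    using \<open>m \<le> k\<close> by (simp flip: power_add add: add_mult_distrib2[symmetric])
  then have "unif_prob (seeds d k) (\<lambda>as. \<forall>i<m. gf_poly_eval P as (xs ! i) \<in> Bs ! i)
      = (\<Prod>i<m. real (card (Bs ! i))) / 2 ^ (d * m)"
    unfolding unif_prob_def card_seeds_eval_in[OF assms] card_seeds by simp
  then show ?thesis by (simp add: prod_dividef power_mult)
qed

section \<open>Balls into bins under \<open>k\<close>-wise independence\<close>

definition binom_partial :: "nat \<Rightarrow> nat \<Rightarrow> real \<Rightarrow> real" where
  "binom_partial n k x = (\<Sum>i<k. (-1) ^ i * real (n choose i) * x ^ i)"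

lemma binom_partial_Suc:
  "binom_partial (Suc n) (Suc k) x = binom_partial n (Suc k) x - x * binom_partial n k x"
proof -
  have "binom_partial (Suc n) (Suc k) x
      = 1 + (\<Sum>j<k. (-1)^(Suc j) * real (n choose Suc j) * x ^ Suc j
                  + (-1)^(Suc j) * real (n choose j) * x ^ Suc j)"
    unfolding binom_partial_def by (simp add: sum.lessThan_Suc_shift algebra_simps del: sum.lessThan_Suc)
  also have "\<dots> = 1 + (\<Sum>j<k. (-1)^(Suc j) * real (n choose Suc j) * x ^ Suc j)
      + (\<Sum>j<k. (-1)^(Suc j) * real (n choose j) * x ^ Suc j)"
    by (simp only: sum.distrib add.assoc)
  also have "1 + (\<Sum>j<k. (-1)^(Suc j) * real (n choose Suc j) * x ^ Suc j) = binom_partial n (Suc k) x"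
    unfolding binom_partial_def by (simp add: sum.lessThan_Suc_shift del: sum.lessThan_Suc)
  also have "(\<Sum>j<k. (-1)^(Suc j) * real (n choose j) * x ^ Suc j) = - x * binom_partial n k x"
    unfolding binom_partial_def by (simp add: sum_distrib_left algebra_simps)
  finally show ?thesis by simp
qed

text \<open>Bonferroni: truncating the binomial expansion of \<open>(1 - x) ^ n\<close> after \<open>k\<close> terms
  errs by at most the first omitted term, with sign \<open>(-1) ^ k\<close>.\<close>

lemma binom_partial_remainder_bounds:
  assumes "0 \<le> x" "x \<le> 1"
  shows "0 \<le> (-1) ^ k * ((1 - x) ^ n - binom_partial n k x)"
    and "(-1) ^ k * ((1 - x) ^ n - binom_partial n k x) \<le> real (n choose k) * x ^ k"
proof -
  define R where "R n k = (-1) ^ k * ((1 - x) ^ n - binom_partial n k x)" for n k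
  have "0 \<le> R n k \<and> R n k \<le> real (n choose k) * x ^ k"
  proof (induction n arbitrary: k)
    case 0
    then show ?case
      by (cases k) (auto simp: R_def binom_partial_def sum.lessThan_Suc_shift simp del: sum.lessThan_Suc)
  next
    case (Suc n)
    show ?case
    proof (cases k)
      case 0
      have "(1 - x) ^ Suc n \<le> 1" using assms by (intro power_le_one) auto
      then show ?thesis using 0 assms by (simp add: R_def binom_partial_def)
    next
      case (Suc k')
      have "R (Suc n) k = R n k + x * R n k'"
        unfolding R_def Suc binom_partial_Suc by (simp add: algebra_simps)
      moreover have "x * R n k' \<le> x * (real (n choose k') * x ^ k')"
        using Suc.IH[of k'] assms by (intro mult_left_mono) auto
      moreover have "real (Suc n choose k) * x ^ k = real (n choose k) * x ^ k + x * (real (n choose k') * x ^ k')"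
        unfolding Suc by (simp add: algebra_simps)
      ultimately show ?thesis using Suc.IH[of k] Suc.IH[of k'] assms by auto
    qed
  qed
  then show "0 \<le> R n k" "R n k \<le> real (n choose k) * x ^ k" by auto
qed

lemma power_diff_le_mean_value:
  fixes a c :: real
  assumes "0 \<le> c" "c \<le> a"
  shows "a ^ Suc n - c ^ Suc n \<le> real (Suc n) * a ^ n * (a - c)"
proof (induction n)
  case (Suc n)
  have "a ^ Suc (Suc n) - c ^ Suc (Suc n) = a * (a ^ Suc n - c ^ Suc n) + c ^ Suc n * (a - c)"
    by (simp add: algebra_simps)
  also have "\<dots> \<le> a * (real (Suc n) * a ^ n * (a - c)) + a ^ Suc n * (a - c)"
    using assms Suc by (intro add_mono mult_left_mono mult_right_mono power_mono) auto
  also have "\<dots> = real (Suc (Suc n)) * a ^ Suc n * (a - c)" by (simp add: algebra_simps)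
  finally show ?case .
qed simp

lemma mean_value_le_power_diff:
  fixes a c :: real
  assumes "0 \<le> c" "c \<le> a"
  shows "real (Suc n) * c ^ n * (a - c) \<le> a ^ Suc n - c ^ Suc n"
proof (induction n)
  case (Suc n)
  have diff_nonneg: "0 \<le> a ^ Suc n - c ^ Suc n" using assms power_mono[of c a "Suc n"] by simp
  have "real (Suc (Suc n)) * c ^ Suc n * (a - c) = c * (real (Suc n) * c ^ n * (a - c)) + c ^ Suc n * (a - c)"
    by (simp add: algebra_simps)
  also have "\<dots> \<le> a * (a ^ Suc n - c ^ Suc n) + c ^ Suc n * (a - c)"
    using Suc assms diff_nonneg by (intro add_mono mult_mono) auto
  also have "\<dots> = a ^ Suc (Suc n) - c ^ Suc (Suc n)" by (simp add: algebra_simps)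
  finally show ?case .
qed simp

text \<open>The left-hand side is the variance of the number of empty bins when \<open>Z\<close> balls are thrown
  independently into \<open>1 / x\<close> bins.\<close>

lemma empty_bins_variance_bound:
  fixes x :: real and Z :: nat
  assumes "0 < x" "x \<le> 1/2" "Z \<ge> 1"
  shows "(1/x) * (1-x)^Z + (1/x) * (1/x - 1) * (1-2*x)^Z - (1/x)^2 * ((1-x)^Z)^2 \<le> real Z ^ 2 * x"
proof -
  obtain m where m: "Z = Suc m" using assms by (cases Z) auto
  define u where "u = (1-x)^Z"
  define v where "v = (1-2*x)^Z"
  have u1: "1 - u \<le> Z * x"
    using Bernoulli_inequality[of "-x" Z] assms unfolding u_def by simp
  have u0: "0 \<le> u" using assms unfolding u_def by simp
  have c0: "0 \<le> 1 - 2*x" "1 - 2*x \<le> (1-x)^2" using assms by (auto simp: power2_eq_square algebra_simps)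
  have uv: "u^2 - v \<ge> real Z * (1-2*x)^m * x^2"
  proof -
    have "real (Suc m) * (1-2*x)^m * ((1-x)^2 - (1-2*x)) \<le> ((1-x)^2)^Suc m - (1-2*x)^Suc m"
      by (rule mean_value_le_power_diff[OF c0])
    moreover have "(1-x)^2 - (1-2*x) = x^2" by (simp add: power2_eq_square algebra_simps)
    moreover have "((1-x)^2)^Suc m = u^2" unfolding u_def m by (metis power_mult mult.commute)
    ultimately show ?thesis unfolding v_def m by simp
  qed
  have "(1-x)^m - (1-2*x)^m \<le> real m * x"
  proof (cases m)
    case (Suc m')
    have "(1-x)^Suc m' - (1-2*x)^Suc m' \<le> real (Suc m') * (1-x)^m' * ((1-x) - (1-2*x))"
      using assms by (intro power_diff_le_mean_value) auto
    also have "\<dots> \<le> real (Suc m') * 1 * x"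
      using assms by (intro mult_mono power_le_one) auto
    finally show ?thesis using Suc by simp
  qed simp
  moreover have "0 \<le> (1-x)^m - (1-2*x)^m" using power_mono[of "1-2*x" "1-x" m] assms by simp
  ultimately have "(1-x) * ((1-x)^m - (1-2*x)^m) \<le> 1 * (real m * x)"
    using assms by (intro mult_mono) auto
  then have "u - (1-x) * (1-2*x)^m \<le> real m * x"
    unfolding u_def m by (simp add: algebra_simps)
  have "(1/x) * u + (1/x) * (1/x - 1) * v - (1/x)^2 * u^2
      = (1/x) * u * (1 - u) - (1/x) * (1/x - 1) * (u^2 - v)"
    using assms by (simp add: field_simps power2_eq_square)
  also have "\<dots> \<le> (1/x) * u * (Z * x) - (1/x) * (1/x - 1) * (real Z * (1-2*x)^m * x^2)"
    using assms u0 by (intro diff_mono mult_left_mono u1 uv) (auto simp: field_simps)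
  also have "\<dots> = Z * (u - (1 - x) * (1-2*x)^m)"
    using assms by (simp add: field_simps power2_eq_square)
  also have "\<dots> \<le> Z * (real m * x)"
    using \<open>u - (1-x) * (1-2*x)^m \<le> real m * x\<close> by (intro mult_left_mono) auto
  also have "\<dots> \<le> real Z ^ 2 * x" using m assms by (simp add: power2_eq_square)
  finally show ?thesis unfolding u_def v_def .
qed

lemma binomial_mult_power_le:
  fixes y :: real
  assumes "y \<ge> 0"
  shows "real (n choose k) * y ^ k \<le> (real n * y) ^ k"
proof (cases "k \<le> n")
  case True
  then have "real (n choose k) \<le> real n ^ k" by (metis binomial_le_pow of_nat_le_iff of_nat_power)
  then show ?thesis using assms by (simp add: power_mult_distrib mult_right_mono)
qed (use assms in \<open>simp add: binomial_eq_0\<close>)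

lemma sum_square_le_diag_offdiag:
  fixes A B :: real
  assumes "\<And>j j'. j < b \<Longrightarrow> j' < b \<Longrightarrow> f j j' \<le> (if j = j' then A else B)"
  shows "(\<Sum>j<b. \<Sum>j'<b. f j j') \<le> real b * A + real b * (real b - 1) * B"
proof -
  have row: "(\<Sum>j'<b. (if j = j' then A else B)) = A + (real b - 1) * B" if "j < b" for j
  proof -
    have "(\<Sum>j'<b. (if j = j' then A else B)) = A + (\<Sum>j'\<in>{..<b} - {j}. B)"
      using that by (simp add: sum.remove[of _ j] sum.cong[OF refl, of "{..<b} - {j}"])
    then show ?thesis using that by (simp add: of_nat_diff)
  qed
  have "(\<Sum>j<b. \<Sum>j'<b. f j j') \<le> (\<Sum>j<b. \<Sum>j'<b. (if j = j' then A else B))"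
    using assms by (intro sum_mono) auto
  also have "\<dots> = (\<Sum>j<b. A + (real b - 1) * B)" using row by simp
  also have "\<dots> = real b * A + real b * (real b - 1) * B" by (simp add: algebra_simps)
  finally show ?thesis .
qed


locale kwise_hash =
  fixes \<Omega> :: "'a set" and H :: "'a \<Rightarrow> nat \<Rightarrow> nat" and S :: "nat set" and b k :: nat
  assumes finite_\<Omega>: "finite \<Omega>" and \<Omega>_nonempty: "\<Omega> \<noteq> {}" and finite_S: "finite S"
    and H_less: "\<And>\<omega> x. \<omega> \<in> \<Omega> \<Longrightarrow> x \<in> S \<Longrightarrow> H \<omega> x < b"
    and kwise: "\<And>T B. T \<subseteq> S \<Longrightarrow> card T \<le> k \<Longrightarrow> B \<subseteq> {..<b} \<Longrightarrow>
                  unif_prob \<Omega> (\<lambda>\<omega>. \<forall>x\<in>T. H \<omega> x \<in> B) = (real (card B) / b) ^ card T"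
begin

text \<open>The \<open>i\<close>-th binomial moment of the number of balls landing in \<open>B\<close> counts the
  \<open>i\<close>-subsets of \<open>S\<close> mapped into \<open>B\<close>, so for \<open>i \<le> k\<close> it agrees with full independence.\<close>

lemma expect_choose_hits:
  assumes "B \<subseteq> {..<b}" "i \<le> k"
  shows "unif_expect \<Omega> (\<lambda>\<omega>. real (card {x\<in>S. H \<omega> x \<in> B} choose i))
       = real (card S choose i) * (card B / b) ^ i"
proof -
  define Sub where "Sub = {T. T \<subseteq> S \<and> card T = i}"
  have "finite Sub" unfolding Sub_def using finite_S by auto
  have "real (card {x\<in>S. H \<omega> x \<in> B} choose i) = (\<Sum>T\<in>Sub. of_bool (\<forall>x\<in>T. H \<omega> x \<in> B))" for \<omega>
  proof -
    have "card {x\<in>S. H \<omega> x \<in> B} choose i = card {T. T \<subseteq> {x\<in>S. H \<omega> x \<in> B} \<and> card T = i}"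
      using finite_S by (simp add: n_subsets)
    also have "{T. T \<subseteq> {x\<in>S. H \<omega> x \<in> B} \<and> card T = i} = {T\<in>Sub. \<forall>x\<in>T. H \<omega> x \<in> B}"
      unfolding Sub_def by auto
    finally show ?thesis using real_card_filter_eq_sum[OF \<open>finite Sub\<close>] by simp
  qed
  then have "unif_expect \<Omega> (\<lambda>\<omega>. real (card {x\<in>S. H \<omega> x \<in> B} choose i))
      = (\<Sum>T\<in>Sub. unif_prob \<Omega> (\<lambda>\<omega>. \<forall>x\<in>T. H \<omega> x \<in> B))"
    by (simp add: unif_expect_sum unif_prob_eq_expect[OF finite_\<Omega>])
  also have "\<dots> = (\<Sum>T\<in>Sub. (card B / b) ^ i)"
    using kwise assms by (intro sum.cong) (auto simp: Sub_def)
  also have "\<dots> = real (card S choose i) * (card B / b) ^ i"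
    unfolding Sub_def using finite_S by (simp add: n_subsets)
  finally show ?thesis .
qed

text \<open>Inclusion--exclusion for the event that no ball lands in \<open>B\<close>, truncated after \<open>k\<close> terms.\<close>

lemma prob_avoid_approx:
  assumes B: "B \<subseteq> {..<b}"
  shows "\<bar>unif_prob \<Omega> (\<lambda>\<omega>. \<forall>x\<in>S. H \<omega> x \<notin> B) - (1 - card B / b) ^ card S\<bar>
       \<le> real (card S choose k) * (card B / b) ^ k"
proof -
  define N where "N \<omega> = card {x\<in>S. H \<omega> x \<in> B}" for \<omega>
  define x where "x = real (card B) / b"
  define R where "R n y = (-1) ^ k * ((1 - y) ^ n - binom_partial n k y)" for n y
  have "card B \<le> b" using card_mono[OF _ B] by simp
  then have x01: "0 \<le> x" "x \<le> 1" unfolding x_def by (auto simp: divide_le_eq_1)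
  have sign: "(-1::real) ^ k * (-1) ^ k = 1" by (simp flip: power_mult_distrib)
  have expand: "(1 - y) ^ n = binom_partial n k y + (-1) ^ k * R n y" for n y
    unfolding R_def by (simp add: right_diff_distrib mult.assoc[symmetric] sign)
  have expand_1: "of_bool (n = 0) = binom_partial n k 1 + (-1) ^ k * R n 1" for n
    using expand[where n=n and y=1] by (cases n) simp_all
  have "unif_prob \<Omega> (\<lambda>\<omega>. \<forall>x\<in>S. H \<omega> x \<notin> B) = unif_expect \<Omega> (\<lambda>\<omega>. of_bool (N \<omega> = 0))"
    unfolding unif_prob_eq_expect[OF finite_\<Omega>] N_def using finite_S by (intro unif_expect_cong) auto
  also have "\<dots> = unif_expect \<Omega> (\<lambda>\<omega>. binom_partial (N \<omega>) k 1 + (-1) ^ k * R (N \<omega>) 1)"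
    by (simp only: expand_1)
  also have "\<dots> = binom_partial (card S) k x + (-1) ^ k * unif_expect \<Omega> (\<lambda>\<omega>. R (N \<omega>) 1)"
    unfolding binom_partial_def
    by (simp add: unif_expect_add unif_expect_sum unif_expect_cmult N_def expect_choose_hits[OF B]
        x_def mult.assoc)
  finally have "unif_prob \<Omega> (\<lambda>\<omega>. \<forall>x\<in>S. H \<omega> x \<notin> B) - (1 - x) ^ card S
      = (-1) ^ k * (unif_expect \<Omega> (\<lambda>\<omega>. R (N \<omega>) 1) - R (card S) x)"
    unfolding expand by (simp add: algebra_simps)
  then have "\<bar>unif_prob \<Omega> (\<lambda>\<omega>. \<forall>x\<in>S. H \<omega> x \<notin> B) - (1 - x) ^ card S\<bar>
      = \<bar>unif_expect \<Omega> (\<lambda>\<omega>. R (N \<omega>) 1) - R (card S) x\<bar>"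
    by (simp add: abs_mult)
  moreover have "0 \<le> unif_expect \<Omega> (\<lambda>\<omega>. R (N \<omega>) 1)"
    unfolding R_def by (intro unif_expect_nonneg binom_partial_remainder_bounds) auto
  moreover have "unif_expect \<Omega> (\<lambda>\<omega>. R (N \<omega>) 1) \<le> real (card S choose k) * x ^ k"
  proof -
    have "unif_expect \<Omega> (\<lambda>\<omega>. R (N \<omega>) 1) \<le> unif_expect \<Omega> (\<lambda>\<omega>. real (N \<omega> choose k))"
      unfolding R_def using binom_partial_remainder_bounds(2)[of 1] by (intro unif_expect_mono) auto
    also have "\<dots> = real (card S choose k) * x ^ k"
      unfolding N_def x_def by (rule expect_choose_hits[OF B order.refl])
    finally show ?thesis .
  qed
  moreover have "0 \<le> R (card S) x" "R (card S) x \<le> real (card S choose k) * x ^ k"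
    unfolding R_def using binom_partial_remainder_bounds[OF x01] by auto
  ultimately show ?thesis unfolding x_def by linarith
qed

definition empty_bins :: "'a \<Rightarrow> real" where
  "empty_bins \<omega> = real b - real (card (H \<omega> ` S))"

lemma empty_bins_eq_sum:
  assumes "\<omega> \<in> \<Omega>"
  shows "empty_bins \<omega> = (\<Sum>j<b. of_bool (\<forall>x\<in>S. H \<omega> x \<notin> {j}))"
proof -
  have sub: "H \<omega> ` S \<subseteq> {..<b}" using H_less assms by auto
  have "(\<Sum>j<b. of_bool (\<forall>x\<in>S. H \<omega> x \<notin> {j})) = real (card {j\<in>{..<b}. \<forall>x\<in>S. H \<omega> x \<notin> {j}})"
    by (rule real_card_filter_eq_sum[symmetric]) simp
  also have "\<dots> = real (card ({..<b} - H \<omega> ` S))"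
    by (rule arg_cong[where f="\<lambda>A. real (card A)"]) auto
  also have "\<dots> = real b - real (card (H \<omega> ` S))"
    using sub card_mono[OF _ sub] by (simp add: card_Diff_subset finite_subset of_nat_diff)
  finally show ?thesis unfolding empty_bins_def ..
qed

end

locale kwise_hash_sparse = kwise_hash +
  assumes card_S_ge_1: "card S \<ge> 1" and card_S_le: "4 * card S \<le> b" and k_ge_1: "k \<ge> 1"
begin

lemma b_ge_4: "real b \<ge> 4"
  using card_S_ge_1 card_S_le by linarith

lemma choose_mult_power_le:
  assumes "0 \<le> c" "c \<le> 2"
  shows "real (card S choose k) * (c / b) ^ k \<le> 1 / 2 ^ k"
proof -
  have "real (card S) * c \<le> real (card S) * 2" using assms by (intro mult_left_mono) auto
  also have "\<dots> \<le> b / 2" using card_S_le by simp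
  finally have "real (card S) * (c / b) \<le> 1 / 2" using b_ge_4 by (simp add: field_simps)
  then have "(real (card S) * (c / b)) ^ k \<le> (1 / 2) ^ k"
    using assms b_ge_4 by (intro power_mono) auto
  then show ?thesis
    using binomial_mult_power_le[of "c / b" "card S" k] assms b_ge_4 by (simp add: power_divide)
qed

lemma prob_avoid_bins:
  assumes "B \<subseteq> {..<b}" "card B \<le> 2"
  shows "\<bar>unif_prob \<Omega> (\<lambda>\<omega>. \<forall>x\<in>S. H \<omega> x \<notin> B) - (1 - card B / b) ^ card S\<bar> \<le> 1 / 2 ^ k"
  using prob_avoid_approx[OF assms(1)] choose_mult_power_le[of "card B"] assms(2) by simp

lemma expect_empty_bins:
  "\<bar>unif_expect \<Omega> empty_bins - b * (1 - 1/b) ^ card S\<bar> \<le> b / 2 ^ k"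
proof -
  have "unif_expect \<Omega> empty_bins = unif_expect \<Omega> (\<lambda>\<omega>. \<Sum>j<b. of_bool (\<forall>x\<in>S. H \<omega> x \<notin> {j}))"
    by (rule unif_expect_cong) (rule empty_bins_eq_sum)
  then have "unif_expect \<Omega> empty_bins = (\<Sum>j<b. unif_prob \<Omega> (\<lambda>\<omega>. \<forall>x\<in>S. H \<omega> x \<notin> {j}))"
    by (simp only: unif_expect_sum unif_prob_eq_expect[OF finite_\<Omega>])
  then have "\<bar>unif_expect \<Omega> empty_bins - (\<Sum>j<b. (1 - 1/b) ^ card S)\<bar>
      \<le> (\<Sum>j<b. \<bar>unif_prob \<Omega> (\<lambda>\<omega>. \<forall>x\<in>S. H \<omega> x \<notin> {j}) - (1 - 1/b) ^ card S\<bar>)"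
    by (simp only: sum_subtractf[symmetric] sum_abs)
  also have "\<dots> \<le> (\<Sum>j<b. 1 / 2 ^ k)"
    using prob_avoid_bins[of "{_}"] by (intro sum_mono) auto
  finally show ?thesis by simp
qed

lemma expect_empty_bins_square:
  "unif_expect \<Omega> (\<lambda>\<omega>. (empty_bins \<omega>)^2)
     \<le> b * ((1 - 1/b) ^ card S + 1 / 2 ^ k) + b * (real b - 1) * ((1 - 2/b) ^ card S + 1 / 2 ^ k)"
proof -
  have "(empty_bins \<omega>)^2 = (\<Sum>j<b. \<Sum>j'<b. of_bool (\<forall>x\<in>S. H \<omega> x \<notin> {j, j'}))" if "\<omega> \<in> \<Omega>" for \<omega>
    unfolding empty_bins_eq_sum[OF that] power2_eq_square sum_product by (intro sum.cong) auto
  then have "unif_expect \<Omega> (\<lambda>\<omega>. (empty_bins \<omega>)^2)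
      = unif_expect \<Omega> (\<lambda>\<omega>. \<Sum>j<b. \<Sum>j'<b. of_bool (\<forall>x\<in>S. H \<omega> x \<notin> {j, j'}))"
    by (rule unif_expect_cong)
  also have "\<dots> = (\<Sum>j<b. \<Sum>j'<b. unif_prob \<Omega> (\<lambda>\<omega>. \<forall>x\<in>S. H \<omega> x \<notin> {j, j'}))"
    by (simp only: unif_expect_sum unif_prob_eq_expect[OF finite_\<Omega>])
  also have "\<dots> \<le> b * ((1 - 1/b) ^ card S + 1 / 2 ^ k) + b * (real b - 1) * ((1 - 2/b) ^ card S + 1 / 2 ^ k)"
  proof (rule sum_square_le_diag_offdiag)
    fix j j' assume "j < b" "j' < b"
    then show "unif_prob \<Omega> (\<lambda>\<omega>. \<forall>x\<in>S. H \<omega> x \<notin> {j, j'})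
        \<le> (if j = j' then (1 - 1/b) ^ card S + 1 / 2 ^ k else (1 - 2/b) ^ card S + 1 / 2 ^ k)"
      using prob_avoid_bins[of "{j, j'}"] by (auto simp: card_insert_if)
  qed
  finally show ?thesis .
qed

lemma variance_empty_bins:
  "unif_expect \<Omega> (\<lambda>\<omega>. (empty_bins \<omega> - unif_expect \<Omega> empty_bins)^2) \<le> real (card S)^2 / b + 3 * real b ^ 2 / 2 ^ k"
proof -
  define u where "u = (1 - 1/b) ^ card S"
  define v where "v = (1 - 2/b) ^ card S"
  define \<eta> :: real where "\<eta> = 1 / 2 ^ k"
  have "\<eta> \<le> 1/2" unfolding \<eta>_def using power_increasing[of 1 k "2::real"] k_ge_1 by simp
  have "1 + real (card S) * (- (1/b)) \<le> (1 + - (1/b)) ^ card S"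
    using b_ge_4 by (intro Bernoulli_inequality) auto
  then have "1 - real (card S) / b \<le> u" unfolding u_def by simp
  moreover have "real (card S) / b \<le> 1/4" using card_S_le b_ge_4 by (simp add: field_simps)
  ultimately have "3/4 \<le> u" by linarith
  have "u \<le> 1" unfolding u_def using b_ge_4 by (intro power_le_one) auto
  have "0 \<le> u" unfolding u_def using b_ge_4 by simp
  have "b * (u - \<eta>) \<le> unif_expect \<Omega> empty_bins"
    using expect_empty_bins unfolding u_def \<eta>_def by (simp add: abs_le_iff algebra_simps)
  moreover have "0 \<le> b * (u - \<eta>)" using \<open>3/4 \<le> u\<close> \<open>\<eta> \<le> 1/2\<close> by simp
  ultimately have sq: "(b * (u - \<eta>))^2 \<le> (unif_expect \<Omega> empty_bins)^2" by (intro power_mono)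
  have full: "b * u + b * (real b - 1) * v - real b ^ 2 * u^2 \<le> real (card S)^2 / b"
    using empty_bins_variance_bound[of "1/b" "card S"] b_ge_4 card_S_ge_1
    unfolding u_def v_def by simp
  have "real b ^ 2 * (u * \<eta>) \<le> real b ^ 2 * \<eta>"
    using \<open>0 \<le> u\<close> \<open>u \<le> 1\<close> by (intro mult_left_mono mult_left_le_one_le) (auto simp: \<eta>_def)
  moreover have "b * (u + \<eta>) + b * (real b - 1) * (v + \<eta>) - (b * (u - \<eta>))^2
      = (b * u + b * (real b - 1) * v - real b ^ 2 * u^2) + real b ^ 2 * \<eta> + 2 * (real b ^ 2 * (u * \<eta>)) - real b ^ 2 * \<eta>^2"
    by (simp add: power2_eq_square algebra_simps)
  moreover have "0 \<le> real b ^ 2 * \<eta>^2" by simp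
  moreover have "3 * real b ^ 2 * \<eta> = 3 * real b ^ 2 / 2 ^ k" unfolding \<eta>_def by simp
  moreover have "unif_expect \<Omega> (\<lambda>\<omega>. (empty_bins \<omega> - unif_expect \<Omega> empty_bins)^2)
      \<le> b * (u + \<eta>) + b * (real b - 1) * (v + \<eta>) - (b * (u - \<eta>))^2"
    using unif_expect_variance[OF finite_\<Omega> \<Omega>_nonempty, of empty_bins] expect_empty_bins_square sq
    unfolding u_def v_def \<eta>_def by linarith
  ultimately show ?thesis using full by linarith
qed

theorem card_image_concentration:
  fixes \<delta> :: real
  assumes "\<delta> * card S > b / 2 ^ k"
  shows "unif_prob \<Omega> (\<lambda>\<omega>. \<bar>real (card (H \<omega> ` S)) - b * (1 - (1 - 1/b) ^ card S)\<bar> > \<delta> * card S)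
     \<le> (real (card S)^2 / b + 3 * real b ^ 2 / 2 ^ k) / (\<delta> * card S - b / 2 ^ k)^2"
proof -
  define t where "t = \<delta> * card S - b / 2 ^ k"
  have "t > 0" unfolding t_def using assms by simp
  have "\<bar>unif_expect \<Omega> empty_bins - b * (1 - 1/b) ^ card S\<bar> \<le> b / 2 ^ k"
    by (rule expect_empty_bins)
  then have "unif_prob \<Omega> (\<lambda>\<omega>. \<bar>real (card (H \<omega> ` S)) - b * (1 - (1 - 1/b) ^ card S)\<bar> > \<delta> * card S)
      \<le> unif_prob \<Omega> (\<lambda>\<omega>. \<bar>empty_bins \<omega> - unif_expect \<Omega> empty_bins\<bar> \<ge> t)"
    unfolding t_def empty_bins_def by (intro unif_prob_mono[OF finite_\<Omega>]) (auto simp: abs_le_iff algebra_simps)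
  also have "\<dots> \<le> unif_expect \<Omega> (\<lambda>\<omega>. (empty_bins \<omega> - unif_expect \<Omega> empty_bins)^2) / t^2"
    by (rule unif_prob_chebyshev[OF finite_\<Omega> \<open>t > 0\<close>])
  also have "\<dots> \<le> (real (card S)^2 / b + 3 * real b ^ 2 / 2 ^ k) / t^2"
    using variance_empty_bins by (intro divide_right_mono) auto
  finally show ?thesis unfolding t_def .
qed

end

section \<open>The hash families \<open>\<G>\<close> and \<open>\<H>\<close>\<close>

lemma tz_ge_iff:
  assumes "y < 2 ^ d" "s \<le> d"
  shows "s \<le> tz d y \<longleftrightarrow> 2 ^ s dvd y"
proof (cases "y = 0")
  case True then show ?thesis using assms by (simp add: tz_def)
next
  case False
  have ex: "\<exists>i. odd (y div 2 ^ i)" using False bit_eq_iff[of y 0] by (auto simp: bit_iff_odd)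
  have "s \<le> (LEAST i. odd (y div 2 ^ i)) \<longleftrightarrow> (\<forall>i<s. \<not> odd (y div 2 ^ i))"
  proof
    assume "s \<le> (LEAST i. odd (y div 2 ^ i))"
    then show "\<forall>i<s. \<not> odd (y div 2 ^ i)"
    proof (intro allI impI)
      fix i assume "i < s" "s \<le> (LEAST i. odd (y div 2 ^ i))"
      then have "i < (LEAST i. odd (y div 2 ^ i))" by linarith
      then show "\<not> odd (y div 2 ^ i)" by (rule not_less_Least)
    qed
  next
    assume a: "\<forall>i<s. \<not> odd (y div 2 ^ i)"
    show "s \<le> (LEAST i. odd (y div 2 ^ i))"
      using LeastI_ex[OF ex] a not_le by blast
  qed
  also have "\<dots> \<longleftrightarrow> (\<forall>i<s. \<not> bit y i)" by (simp add: bit_iff_odd)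
  also have "\<dots> \<longleftrightarrow> take_bit s y = 0"
    by (auto simp: bit_eq_iff[of "take_bit s y" 0] bit_take_bit_iff)
  also have "\<dots> \<longleftrightarrow> 2 ^ s dvd y" by (simp add: take_bit_eq_mod mod_eq_0_iff_dvd)
  finally show ?thesis using False by (simp add: tz_def)
qed

lemma tz_le:
  assumes "y < 2 ^ d"
  shows "tz d y \<le> d"
proof (cases "y = 0")
  case False
  have below_d: "i < d" if "odd (y div 2 ^ i)" for i
  proof (rule ccontr)
    assume "\<not> i < d"
    then have "(2::nat) ^ d \<le> 2 ^ i" by (intro power_increasing) auto
    then have "y div 2 ^ i = 0" using assms by (intro div_less) linarith
    then show False using that by simp
  qed
  have "\<exists>i. odd (y div 2 ^ i)" using False bit_eq_iff[of y 0] by (auto simp: bit_iff_odd)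
  then have "(LEAST i. odd (y div 2 ^ i)) < d" by (rule below_d[OF LeastI_ex])
  then show ?thesis using False by (simp add: tz_def)
qed (simp add: tz_def)

lemma card_tz_ge:
  assumes "s \<le> d"
  shows "card {y\<in>{..<2^d}. s \<le> tz d y} = 2 ^ (d - s)"
proof -
  have "{y\<in>{..<2^d}. s \<le> tz d y} = (\<lambda>z::nat. z * 2 ^ s) ` {..<2 ^ (d - s)}"
  proof (intro equalityI subsetI)
    fix y assume "y \<in> {y\<in>{..<2^d}. s \<le> tz d y}"
    then have y: "y < 2^d" "2 ^ s dvd y" using tz_ge_iff assms by auto
    then obtain z :: nat where z: "y = z * 2 ^ s" by (metis dvdE mult.commute)
    have "z * 2 ^ s < 2 ^ (d - s) * 2 ^ s" using y z assms by (simp add: power_add[symmetric])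
    then have "z < 2 ^ (d - s)" by simp
    then show "y \<in> (\<lambda>z::nat. z * 2 ^ s) ` {..<2 ^ (d - s)}" using z by auto
  next
    fix y :: nat assume "y \<in> (\<lambda>z::nat. z * 2 ^ s) ` {..<2 ^ (d - s)}"
    then obtain z where z: "z < 2 ^ (d - s)" "y = z * 2 ^ s" by auto
    then have "y < 2 ^ (d - s) * 2 ^ s" by simp
    also have "\<dots> = 2 ^ d" using assms by (simp add: power_add[symmetric])
    finally show "y \<in> {y\<in>{..<2^d}. s \<le> tz d y}" using z tz_ge_iff assms by auto
  qed
  moreover have "inj_on (\<lambda>z::nat. z * 2 ^ s) {..<2 ^ (d - s)}" by (auto simp: inj_on_def)
  ultimately show ?thesis by (simp add: card_image)
qed

lemma card_mod_power2_in:
  assumes "B \<subseteq> {..<2^c}" "c \<le> d"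
  shows "card {y\<in>{..<(2::nat)^d}. y mod 2^c \<in> B} = card B * 2 ^ (d - c)"
proof -
  have eq: "{y\<in>{..<(2::nat)^d}. y mod 2^c \<in> B} = (\<lambda>(q, v). q * 2^c + v) ` ({..<2^(d-c)} \<times> B)"
  proof (intro equalityI subsetI)
    fix y assume "y \<in> {y\<in>{..<(2::nat)^d}. y mod 2^c \<in> B}"
    then have y: "y < 2^d" "y mod 2^c \<in> B" by auto
    have "y div 2^c < 2^(d-c)" using y assms
      by (simp add: div_less_iff_less_mult power_add[symmetric])
    moreover have "y = (y div 2^c) * 2^c + y mod 2^c" by (rule div_mult_mod_eq[symmetric])
    ultimately show "y \<in> (\<lambda>(q, v). q * 2^c + v) ` ({..<2^(d-c)} \<times> B)" using y
      by (auto intro!: image_eqI[where x="(y div 2^c, y mod 2^c)"])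
  next
    fix y assume "y \<in> (\<lambda>(q, v). q * 2^c + v) ` ({..<2^(d-c)} \<times> B)"
    then obtain q v where qv: "q < 2^(d-c)" "v \<in> B" "y = q * 2^c + v" by auto
    have v: "v < 2^c" using qv assms by auto
    then have "y mod 2^c = v" using qv by simp
    moreover have "y < 2^d"
    proof -
      have "y < q * 2^c + 2^c" using qv v by simp
      also have "\<dots> = (q + 1) * 2^c" by simp
      also have "\<dots> \<le> 2^(d-c) * 2^c" using qv by (intro mult_right_mono) auto
      also have "\<dots> = 2^d" using assms by (simp add: power_add[symmetric])
      finally show ?thesis .
    qed
    ultimately show "y \<in> {y\<in>{..<(2::nat)^d}. y mod 2^c \<in> B}" using qv by auto
  qed
  have inj: "inj_on (\<lambda>(q, v). q * 2^c + v) ({..<2^(d-c)} \<times> (B::nat set))"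
  proof (rule inj_onI, clarify)
    fix q v q' v' assume a: "v \<in> B" "v' \<in> B" "q * 2^c + v = q' * 2^c + v'"
    have "v < 2^c" "v' < 2^c" using a assms by auto
    then have "(q * 2^c + v) div 2^c = q" "(q' * 2^c + v') div 2^c = q'"
      "(q * 2^c + v) mod 2^c = v" "(q' * 2^c + v') mod 2^c = v'" by auto
    then show "q = q' \<and> v = v'" using a by metis
  qed
  show ?thesis unfolding eq using inj by (simp add: card_image card_cartesian_product)
qed

context
  fixes P :: "bit poly" and d :: nat
  assumes irr: "irreducible P" and deg: "degree P = d"
begin

lemma prob_hash_G_ge:
  assumes "x < 2^d" "s \<le> d"
  shows "unif_prob (seeds d 2) (\<lambda>fa. s \<le> hash_G P d fa x) = 1 / 2^s"
proof -
  have "unif_prob (seeds d 2) (\<lambda>fa. s \<le> hash_G P d fa x) =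
        unif_prob (seeds d 2) (\<lambda>fa. \<forall>i<1. gf_poly_eval P fa ([x] ! i) \<in> [{y\<in>{..<2^d}. s \<le> tz d y}] ! i)"
    by (intro unif_prob_cong) (simp add: hash_G_def gf_poly_eval_less[OF irr deg])
  also have "\<dots> = (\<Prod>i<1. real (card ([{y\<in>{..<2^d}. s \<le> tz d y}] ! i)) / 2 ^ d)"
    by (rule unif_prob_seeds_eval_in[OF irr deg]) (use assms in auto)
  also have "\<dots> = 2 ^ (d - s) / 2 ^ d" using card_tz_ge[OF assms(2)] by simp
  also have "\<dots> = 1 / 2 ^ s" using assms(2) by (simp add: power_diff)
  finally show ?thesis .
qed

lemma prob_hash_G_ge_pair:
  assumes "x < 2^d" "x' < 2^d" "x \<noteq> x'" "s \<le> d" "s' \<le> d"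
  shows "unif_prob (seeds d 2) (\<lambda>fa. s \<le> hash_G P d fa x \<and> s' \<le> hash_G P d fa x') = 1 / 2^s * (1 / 2^s')"
proof -
  have "unif_prob (seeds d 2) (\<lambda>fa. s \<le> hash_G P d fa x \<and> s' \<le> hash_G P d fa x') =
        unif_prob (seeds d 2) (\<lambda>fa. \<forall>i<2. gf_poly_eval P fa ([x, x'] ! i) \<in> [{y\<in>{..<2^d}. s \<le> tz d y}, {y\<in>{..<2^d}. s' \<le> tz d y}] ! i)"
    by (intro unif_prob_cong) (auto simp: hash_G_def gf_poly_eval_less[OF irr deg] less_2_cases_iff)
  also have "\<dots> = (\<Prod>i<2. real (card ([{y\<in>{..<2^d}. s \<le> tz d y}, {y\<in>{..<2^d}. s' \<le> tz d y}] ! i)) / 2 ^ d)"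
    by (rule unif_prob_seeds_eval_in[OF irr deg]) (use assms in auto)
  also have "\<dots> = 2 ^ (d - s) / 2 ^ d * (2 ^ (d - s') / 2 ^ d)"
    using card_tz_ge[OF assms(4)] card_tz_ge[OF assms(5)] by (simp add: numeral_2_eq_2)
  also have "\<dots> = 1 / 2 ^ s * (1 / 2 ^ s')" using assms by (simp add: power_diff)
  finally show ?thesis .
qed

lemma hash_G_le: "hash_G P d fa x \<le> d"
  unfolding hash_G_def by (rule tz_le[OF gf_poly_eval_less[OF irr deg]])

lemma prob_hash_H_collision:
  assumes "x < 2^d" "x' < 2^d" "x \<noteq> x'" "c \<le> d"
  shows "unif_prob (seeds d 2) (\<lambda>ga. hash_H P c ga x = hash_H P c ga x') = 1 / 2^c"
proof -
  have "unif_prob (seeds d 2) (\<lambda>ga. hash_H P c ga x = hash_H P c ga x') =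
        unif_prob (seeds d 2) (\<lambda>ga. \<exists>v\<in>{..<2^c}. hash_H P c ga x = v \<and> hash_H P c ga x' = v)"
    by (intro unif_prob_cong) (auto simp: hash_H_def)
  also have "\<dots> = (\<Sum>v\<in>{..<2^c}. unif_prob (seeds d 2) (\<lambda>ga. hash_H P c ga x = v \<and> hash_H P c ga x' = v))"
    by (rule unif_prob_disjoint_union) (auto simp: finite_seeds)
  also have "\<dots> = (\<Sum>v\<in>{..<(2::nat)^c}. (1 / 2^c) * (1 / 2^c))"
  proof (intro sum.cong refl)
    fix v :: nat assume v: "v \<in> {..<2^c}"
    define Bv where "Bv = {y\<in>{..<(2::nat)^d}. y mod 2^c \<in> {v}}"
    have cB: "card Bv = 2 ^ (d - c)" unfolding Bv_def using card_mod_power2_in[of "{v}" c d] v assms by simp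
    have "unif_prob (seeds d 2) (\<lambda>ga. hash_H P c ga x = v \<and> hash_H P c ga x' = v) =
        unif_prob (seeds d 2) (\<lambda>ga. \<forall>i<2. gf_poly_eval P ga ([x, x'] ! i) \<in> [Bv, Bv] ! i)"
      by (intro unif_prob_cong) (auto simp: hash_H_def gf_poly_eval_less[OF irr deg] less_2_cases_iff Bv_def)
    also have "\<dots> = (\<Prod>i<2. real (card ([Bv, Bv] ! i)) / 2 ^ d)"
      by (rule unif_prob_seeds_eval_in[OF irr deg]) (use assms in \<open>auto simp: Bv_def\<close>)
    also have "\<dots> = (2 ^ (d - c) / 2 ^ d) * (2 ^ (d - c) / 2 ^ d)"
      using cB by (simp add: numeral_2_eq_2)
    also have "\<dots> = (1 / 2^c) * (1 / 2^c)" using assms by (simp add: power_diff)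
    finally show "unif_prob (seeds d 2) (\<lambda>ga. hash_H P c ga x = v \<and> hash_H P c ga x' = v) = (1 / 2^c) * (1 / 2^c)" .
  qed
  also have "\<dots> = 1 / 2^c" by (simp add: power2_eq_square)
  finally show ?thesis .
qed

lemma prob_hash_H_in:
  assumes "T \<subseteq> {..<2^d}" "card T \<le> k" "B \<subseteq> {..<2^c}" "c \<le> d"
  shows "unif_prob (seeds d k) (\<lambda>ha. \<forall>x\<in>T. hash_H P c ha x \<in> B) = (real (card B) / 2^c) ^ card T"
proof -
  have finT: "finite T" using assms(1) finite_subset by blast
  define xs where "xs = sorted_list_of_set T"
  define Bh where "Bh = {y\<in>{..<(2::nat)^d}. y mod 2^c \<in> B}"
  have xs: "distinct xs" "set xs = T" "length xs = card T" using finT by (auto simp: xs_def)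
  have cB: "card Bh = card B * 2 ^ (d - c)" unfolding Bh_def by (rule card_mod_power2_in[OF assms(3,4)])
  have "unif_prob (seeds d k) (\<lambda>ha. \<forall>x\<in>T. hash_H P c ha x \<in> B) =
        unif_prob (seeds d k) (\<lambda>ha. \<forall>i<card T. gf_poly_eval P ha (xs ! i) \<in> replicate (card T) Bh ! i)"
  proof (intro unif_prob_cong)
    fix ha
    have "(\<forall>x\<in>T. hash_H P c ha x \<in> B) \<longleftrightarrow> (\<forall>x\<in>set xs. gf_poly_eval P ha x \<in> Bh)"
      using xs by (auto simp: hash_H_def Bh_def gf_poly_eval_less[OF irr deg])
    also have "\<dots> \<longleftrightarrow> (\<forall>i<length xs. gf_poly_eval P ha (xs ! i) \<in> Bh)"
      by (rule all_set_conv_all_nth)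
    also have "\<dots> \<longleftrightarrow> (\<forall>i<card T. gf_poly_eval P ha (xs ! i) \<in> replicate (card T) Bh ! i)"
      using xs(3) by simp
    finally show "(\<forall>x\<in>T. hash_H P c ha x \<in> B) \<longleftrightarrow> \<dots>" .
  qed
  also have "\<dots> = (\<Prod>i<card T. real (card (replicate (card T) Bh ! i)) / 2 ^ d)"
    by (rule unif_prob_seeds_eval_in[OF irr deg]) (use xs assms in \<open>auto simp: Bh_def\<close>)
  also have "\<dots> = (\<Prod>i<card T. real (card B) * 2 ^ (d - c) / 2 ^ d)"
    using cB by simp
  also have "\<dots> = (real (card B) / 2^c) ^ card T"
    using assms(4) by (simp add: power_diff)
  finally show ?thesis .
qed

end


lemma ceiling_log2_bounds:
  fixes N :: nat
  assumes "N \<ge> 1"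
  defines "L \<equiv> nat \<lceil>log 2 (real N)\<rceil>"
  shows "real N \<le> 2 ^ L" "2 ^ L < 2 * real N" "\<lceil>log 2 (real N)\<rceil> = int L"
proof -
  have "log 2 (real N) \<ge> 0" using assms by simp
  then show L: "\<lceil>log 2 (real N)\<rceil> = int L" unfolding L_def by simp
  have "real N = 2 powr (log 2 (real N))" using assms by simp
  also have "\<dots> \<le> 2 powr (real L)" using L by (intro powr_mono) linarith+
  also have "\<dots> = 2 ^ L" by (simp add: powr_realpow)
  finally show "real N \<le> 2 ^ L" .
  have "(2::real) ^ L = 2 powr (real L)" by (simp add: powr_realpow)
  also have "\<dots> < 2 powr (log 2 (real N) + 1)" using L by (intro powr_less_mono) linarith+
  also have "\<dots> = 2 * real N" using assms by (simp add: powr_add)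
  finally show "2 ^ L < 2 * real N" .
qed

lemma b_exp_bounds:
  fixes \<epsilon> :: real assumes "0 < \<epsilon>" "\<epsilon> < 1"
  shows "b_exp \<epsilon> \<ge> 27" "\<epsilon>^2 * real (b_of \<epsilon>) \<ge> 9 * 2^23"
proof -
  define r where "r = 9 * 2^23 / \<epsilon>^2"
  have r: "r \<ge> 9 * 2^23" unfolding r_def using assms
    by (simp add: field_simps) (metis less_eq_real_def mult_le_cancel_left1 power_le_one power_less_one_iff zero_less_numeral zero_less_power mult_le_one)
  have l26: "log 2 ((2::real)^26) = 26" using log_pow_cancel[of "2::real" 26] by simp
  have "log 2 r > 26"
  proof -
    have "log 2 r \<ge> log 2 (9 * 2^23)" using r by (subst log_le_cancel_iff) auto
    moreover have "log 2 (9 * 2^23) > log 2 ((2::real)^26)" by (subst log_less_cancel_iff) auto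
    ultimately show ?thesis unfolding l26 by simp
  qed
  then have "\<lceil>log 2 r\<rceil> \<ge> 27" by linarith
  then show "b_exp \<epsilon> \<ge> 27" unfolding b_exp_def r_def by linarith
  have "r = 2 powr (log 2 r)" using r by simp
  also have "\<dots> \<le> 2 powr (real (b_exp \<epsilon>))"
  proof (intro powr_mono)
    have "log 2 r \<le> real_of_int \<lceil>log 2 r\<rceil>" by simp
    also have "\<dots> = real (nat \<lceil>log 2 r\<rceil>)" using \<open>\<lceil>log 2 r\<rceil> \<ge> 27\<close> by simp
    finally show "log 2 r \<le> real (b_exp \<epsilon>)" unfolding b_exp_def r_def .
  qed simp
  also have "\<dots> = real (b_of \<epsilon>)" by (simp add: b_of_def powr_realpow)
  finally show "\<epsilon>^2 * real (b_of \<epsilon>) \<ge> 9 * 2^23" unfolding r_def using assms by (simp add: field_simps)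
qed

lemma k_of_ge_four_b_exp:
  fixes \<epsilon> :: real assumes "0 < \<epsilon>" "\<epsilon> < 1"
  shows "real (k_of \<epsilon>) \<ge> 4 * b_exp \<epsilon>"
proof -
  have "ln (real (b_of \<epsilon>)) = real (b_exp \<epsilon>) * ln 2"
    by (simp add: b_of_def ln_realpow)
  moreover have "ln (2::real) \<ge> 2/3" by (rule ln2_ge_two_thirds)
  moreover have "real (b_exp \<epsilon>) * ln 2 \<ge> real (b_exp \<epsilon>) * (2/3)"
    using ln2_ge_two_thirds by (intro mult_left_mono) auto
  ultimately have "15 / 2 * ln (real (b_of \<epsilon>)) \<ge> 15/2 * (real (b_exp \<epsilon>) * (2/3))"
    by simp
  then have "15 / 2 * ln (real (b_of \<epsilon>)) + 16 \<ge> 4 * b_exp \<epsilon>" by simp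
  then show ?thesis unfolding k_of_def by linarith
qed



section \<open>The estimator on a fixed seed\<close>

lemma abs_ln_le:
  fixes w :: real assumes "w > 0"
  shows "\<bar>ln w\<bar> \<le> max (w - 1) ((1 - w) / w)"
proof (cases "w \<ge> 1")
  case True
  then have "0 \<le> ln w" "ln w \<le> w - 1" using assms by (auto intro: ln_le_minus_one)
  then show ?thesis by simp
next
  case False
  have "ln w < 0" using False assms by (intro ln_less_zero) auto
  moreover have "ln (1/w) \<le> 1/w - 1" using assms by (intro ln_le_minus_one) auto
  moreover have "ln (1/w) = - ln w" using assms by (simp add: ln_div)
  moreover have "1/w - 1 = (1 - w)/w" using assms by (simp add: field_simps)
  ultimately show ?thesis by simp
qed

lemma abs_ln_div_le:
  fixes u v :: real
  assumes u: "u \<ge> 5/6" and v: "v \<ge> 7/9"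
  shows "\<bar>ln (v / u)\<bar> \<le> 9/7 * \<bar>v - u\<bar>"
proof -
  have "\<bar>ln (v / u)\<bar> \<le> max ((v - u) / u) ((u - v) / v)"
  proof -
    have "v / u - 1 = (v - u) / u" "(1 - v / u) / (v / u) = (u - v) / v" using u v by (simp_all add: field_simps)
    then show ?thesis using abs_ln_le[of "v / u"] u v by simp
  qed
  moreover have "(v - u) / u \<le> 9/7 * \<bar>v - u\<bar>"
  proof -
    have "(v - u) / u \<le> \<bar>v - u\<bar> / u" using u by (intro divide_right_mono) auto
    also have "\<dots> \<le> \<bar>v - u\<bar> / (5/6)" using u by (intro divide_left_mono) auto
    also have "\<dots> \<le> 9/7 * \<bar>v - u\<bar>" using abs_ge_zero[of "v - u"] by simp
    finally show ?thesis .
  qed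
  moreover have "(u - v) / v \<le> 9/7 * \<bar>v - u\<bar>"
  proof -
    have "(u - v) / v \<le> \<bar>v - u\<bar> / v" using v by (intro divide_right_mono) auto
    also have "\<dots> \<le> \<bar>v - u\<bar> / (7/9)" using v by (intro divide_left_mono) auto
    finally show ?thesis by simp
  qed
  ultimately show ?thesis by (meson max.boundedI order_trans)
qed

text \<open>\<open>rho_inv\<close> inverts \<open>\<rho>(z) = b (1 - (1 - 1/b) ^ z)\<close>, the expected number of bins hit by
  \<open>z\<close> balls; in the range where at most a \<open>2/9\<close> fraction of bins is hit it is Lipschitz
  with constant \<open>9/7\<close>.\<close>

lemma rho_inv_error_le:
  fixes bn z :: nat and p :: real
  defines "b \<equiv> real bn"
  assumes b: "b \<ge> 2" and u: "(1 - 1/b) ^ z \<ge> 5/6" and v: "1 - p/b \<ge> 7/9"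
  shows "\<bar>rho_inv bn p - real z\<bar> \<le> 9/7 * \<bar>b * (1 - (1 - 1/b) ^ z) - p\<bar>"
proof -
  define u where "u = (1 - 1/b) ^ z"
  define v where "v = 1 - p/b"
  define lb where "lb = ln (1 - 1/b)"
  have "lb \<le> - (1/b)" unfolding lb_def using ln_le_minus_one[of "1 - 1/b"] b by simp
  moreover have "0 < 1/b" using b by simp
  ultimately have "lb < 0" "1/b \<le> \<bar>lb\<bar>" by linarith+
  then have "1 / \<bar>lb\<bar> \<le> 1 / (1/b)" using \<open>0 < 1/b\<close> \<open>lb < 0\<close> by (intro divide_left_mono) (auto simp: divide_neg_pos)
  then have "1 / \<bar>lb\<bar> \<le> b" by simp
  have "0 < u" "0 < v" using u v unfolding u_def v_def by linarith+
  have "0 < 1 - 1/b" using b by simp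
  then have "ln u = real z * lb" unfolding u_def lb_def by (simp add: ln_realpow)
  then have "ln v = ln (v / u) + real z * lb" using \<open>0 < u\<close> \<open>0 < v\<close> by (simp add: ln_div)
  moreover have "rho_inv bn p = ln v / lb" unfolding rho_inv_def v_def lb_def b_def ..
  ultimately have "rho_inv bn p - real z = ln (v / u) / lb"
    using \<open>lb < 0\<close> by (simp add: add_divide_distrib)
  then have "\<bar>rho_inv bn p - real z\<bar> = \<bar>ln (v / u)\<bar> * (1 / \<bar>lb\<bar>)" by (simp add: abs_divide)
  also have "\<dots> \<le> 9/7 * \<bar>v - u\<bar> * b"
    using abs_ln_div_le[of u v] u v \<open>1 / \<bar>lb\<bar> \<le> b\<close> unfolding u_def v_def
    by (intro mult_mono) auto
  also have "\<dots> = 9/7 * \<bar>b * (v - u)\<bar>" using b by (simp add: abs_mult mult_ac)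
  also have "b * (v - u) = b * (1 - u) - p" unfolding v_def using b by (simp add: field_simps)
  finally show ?thesis unfolding u_def .
qed

lemma level_estimate_accurate:
  fixes bn z :: nat and N \<mu> p \<epsilon> s2 :: real
  defines "b \<equiv> real bn" and "Z \<equiv> real z"
  assumes b: "b \<ge> 8" and eps: "0 < \<epsilon>" "\<epsilon> \<le> 1" and N: "N > 0" and s2: "s2 > 0"
    and \<mu>: "\<mu> = N / s2" "\<mu> \<le> b/8"
    and Z\<mu>: "\<bar>Z - \<mu>\<bar> \<le> \<epsilon>/3 * \<mu>"
    and pZ: "\<bar>p - b * (1 - (1 - 1/b) ^ z)\<bar> \<le> \<epsilon>/3 * Z"
  shows "p < b" and "\<bar>s2 * rho_inv bn p - N\<bar> \<le> \<epsilon> * N"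
proof -
  have "\<mu> > 0" using \<mu> N s2 by simp
  have "\<epsilon> * \<mu> \<le> 1 * \<mu>" using eps \<open>\<mu> > 0\<close> by (intro mult_right_mono) auto
  then have Z_le: "Z \<le> 4/3 * \<mu>" using Z\<mu> abs_ge_self[of "Z - \<mu>"] by linarith
  define u where "u = (1 - 1/b) ^ z"
  have "1 + real z * (- (1/b)) \<le> (1 + - (1/b)) ^ z" using b by (intro Bernoulli_inequality) auto
  then have u_ge: "1 - Z/b \<le> u" unfolding u_def Z_def by simp
  have "Z/b \<le> 1/6" using Z_le \<mu>(2) b by (simp add: divide_le_eq)
  then have u_large: "u \<ge> 5/6" using u_ge by linarith
  have "b * (1 - u) \<le> b * (Z/b)" using u_ge b by (intro mult_left_mono) auto
  then have "b * (1 - u) \<le> Z" using b by simp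
  moreover have "\<epsilon> * Z \<le> 1 * Z" using eps unfolding Z_def by (intro mult_right_mono) auto
  ultimately have "p \<le> 2/9 * b"
    using pZ Z_le \<mu>(2) abs_ge_self[of "p - b * (1 - u)"] unfolding u_def by linarith
  then show "p < b" using b by simp
  have v_large: "1 - p / b \<ge> 7/9" using \<open>p \<le> 2/9 * b\<close> b by (simp add: field_simps)
  have "\<bar>rho_inv bn p - Z\<bar> \<le> 9/7 * \<bar>b * (1 - u) - p\<bar>"
    using rho_inv_error_le[of bn z p] b u_large v_large unfolding u_def b_def Z_def by simp
  also have "\<dots> \<le> 9/7 * (\<epsilon>/3 * Z)" using pZ unfolding u_def by (simp add: abs_minus_commute mult.commute)
  also have "\<dots> \<le> 9/7 * (\<epsilon>/3 * (4/3 * \<mu>))" using Z_le eps by (intro mult_left_mono) auto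
  finally have rho_Z: "\<bar>rho_inv bn p - Z\<bar> \<le> 9/7 * (\<epsilon>/3 * (4/3 * \<mu>))" .
  have "\<bar>s2 * rho_inv bn p - N\<bar> = \<bar>s2 * (rho_inv bn p - Z) + s2 * (Z - \<mu>)\<bar>"
    using \<mu> s2 by (simp add: algebra_simps)
  also have "\<dots> \<le> s2 * \<bar>rho_inv bn p - Z\<bar> + s2 * \<bar>Z - \<mu>\<bar>"
    using s2 by (simp add: abs_mult abs_triangle_ineq[THEN order_trans])
  also have "\<dots> \<le> s2 * (9/7 * (\<epsilon>/3 * (4/3 * \<mu>))) + s2 * (\<epsilon>/3 * \<mu>)"
    using rho_Z Z\<mu> s2 by (intro add_mono mult_left_mono) auto
  also have "\<dots> = (19/21) * \<epsilon> * N" using \<mu> s2 by (simp add: field_simps)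
  also have "\<dots> \<le> \<epsilon> * N" using eps N by simp
  finally show "\<bar>s2 * rho_inv bn p - N\<bar> \<le> \<epsilon> * N" .
qed

lemma tau1_plus: "tau1 A f g h q j + q = max (tau0 A f g h j) (q - 1)"
  unfolding tau1_def by linarith

lemma tau0_le_Max:
  assumes "finite A" "A \<noteq> {}"
  shows "tau0 A f g h j \<le> int (Max (f ` A))"
  unfolding tau0_def
proof (subst Max_le_iff)
  show "finite ({int (f a) |a. a \<in> A \<and> h (g a) = j} \<union> {- 1})" using assms by auto
  show "\<forall>x\<in>{int (f a) |a. a \<in> A \<and> h (g a) = j} \<union> {- 1}. x \<le> int (Max (f ` A))"
    using assms by auto
qed simp

lemma tau0_ge:
  assumes "finite A" "a \<in> A"
  shows "int (f a) \<le> tau0 A f g h (h (g a))"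
  unfolding tau0_def using assms by (intro Max_ge) auto

lemma ge_tau0_iff:
  assumes "finite A" "(s::int) \<ge> 0"
  shows "s \<le> tau0 A f g h j \<longleftrightarrow> (\<exists>a\<in>A. h (g a) = j \<and> s \<le> int (f a))"
  unfolding tau0_def using assms by (subst Max_ge_iff) auto

lemma Max_tau1_plus:
  assumes "finite A" "A \<noteq> {}" "\<forall>a\<in>A. h (g a) < b"
  shows "Max ((\<lambda>j. tau1 A f g h q j + q) ` {..<b}) = max (int (Max (f ` A))) (q - 1)"
proof (rule Max_eqI)
  fix y assume "y \<in> (\<lambda>j. tau1 A f g h q j + q) ` {..<b}"
  then show "y \<le> max (int (Max (f ` A))) (q - 1)"
    using tau0_le_Max[OF assms(1,2)] by (auto simp: tau1_plus max.coboundedI1)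
next
  have "Max (f ` A) \<in> f ` A" using assms by (intro Max_in) auto
  then obtain a where a: "a \<in> A" "f a = Max (f ` A)" by auto
  then have "tau0 A f g h (h (g a)) = int (Max (f ` A))"
    using tau0_le_Max[OF assms(1,2)] tau0_ge[OF assms(1) a(1)] by (metis order_antisym)
  then show "max (int (Max (f ` A))) (q - 1) \<in> (\<lambda>j. tau1 A f g h q j + q) ` {..<b}"
    using assms a by (auto simp: tau1_plus intro!: image_eqI[where x="h (g a)"])
qed simp

lemma bins_above_eq_image:
  assumes "finite A" "\<forall>a\<in>A. h (g a) < b" "q - 1 < int s"
  shows "{j \<in> {..<b}. real_of_int (tau1 A f g h q j + q) \<ge> real s} = h ` g ` {a\<in>A. s \<le> f a}"
proof -
  have "real_of_int (tau1 A f g h q j + q) \<ge> real s \<longleftrightarrow> int s \<le> tau0 A f g h j" for j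
    using assms(3) by (simp add: tau1_plus) linarith
  also have "\<dots> j \<longleftrightarrow> (\<exists>a\<in>A. h (g a) = j \<and> int s \<le> int (f a))" for j
    using assms(1) by (intro ge_tau0_iff) auto
  finally show ?thesis using assms(2) by auto
qed

text \<open>For every admissible \<open>q\<close> the cutoff \<open>s_c\<close> is \<open>s = max f(A) - log b + 9\<close>, so the
  estimator is \<open>2 ^ s\<close> times \<open>rho_inv\<close> of the number of bins hit by the level set
  \<open>{a \<in> A. s \<le> f a}\<close>.\<close>

lemma Y_c_eq_level_estimate:
  fixes A :: "nat set" and f g h :: "nat \<Rightarrow> nat" and \<beta> L s :: nat and q :: int
  assumes "finite A" "A \<noteq> {}" and "\<forall>a\<in>A. h (g a) < 2 ^ \<beta>" and "\<beta> \<ge> 9"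
    and "\<lceil>log 2 (real (card A))\<rceil> = int L" and "int (Max (f ` A)) \<ge> int L - 6"
    and s: "s = nat (int (Max (f ` A)) - int \<beta> + 9)"
    and "card (h ` g ` {a\<in>A. s \<le> f a}) < 2 ^ \<beta>"
    and "0 \<le> q" "q \<le> q_max (2 ^ \<beta>) A"
  shows "Y_c (2 ^ \<beta>) A f g h q = ereal (2 ^ s * rho_inv (2 ^ \<beta>) (card (h ` g ` {a\<in>A. s \<le> f a})))"
proof -
  define M where "M = Max (f ` A)"
  have log_b: "log 2 (real ((2::nat) ^ \<beta>)) = real \<beta>" by simp
  have "q_max (2 ^ \<beta>) A = max 0 (int L - int \<beta>)"
    unfolding q_max_def assms(5) log_b by simp
  then have "q - 1 \<le> int M" "q - 1 < int s" using assms(6,9,10) \<open>\<beta> \<ge> 9\<close> unfolding s M_def by linarith+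
  then have "Max ((\<lambda>j. tau1 A f g h q j + q) ` {..<2 ^ \<beta>}) = int M"
    using Max_tau1_plus[where h=h and g=g and b="2 ^ \<beta>", OF assms(1-3)] unfolding M_def by simp
  then have "s_c (2 ^ \<beta>) A f g h q = real s"
    unfolding s_c_def t_c_def log_b s M_def by simp
  moreover have "p_c (2 ^ \<beta>) A f g h q = card (h ` g ` {a\<in>A. s \<le> f a})"
    unfolding p_c_def calculation
    using bins_above_eq_image[where h=h and g=g and b="2 ^ \<beta>", OF assms(1,3) \<open>q - 1 < int s\<close>] by simp
  ultimately show ?thesis
    unfolding Y_c_def using assms(8) by (simp add: powr_realpow)
qed

section \<open>The probabilistic analysis\<close>

lemma concentration_bound_numeric:
  fixes b K \<epsilon> Z :: real
  assumes b: "b \<ge> 2" and K: "K \<ge> b^4" and eps: "0 < \<epsilon>" and eb: "\<epsilon>^2 * b \<ge> 9 * 2^23" and Z: "Z \<ge> 1"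
  shows "\<epsilon>/3 * Z > b / K" "(Z^2 / b + 3 * b^2 / K) / (\<epsilon>/3 * Z - b / K)^2 \<le> 1 / 2^19"
proof -
  have K0: "K > 0" using K b by (smt (verit) zero_less_power)
  have bK: "b / K \<le> 1 / b^3"
  proof -
    have "b / K \<le> b / b^4" using K b K0 by (intro divide_left_mono) auto
    also have "\<dots> = 1 / b^3" using b by (simp add: power_eq_if field_simps)
    finally show ?thesis .
  qed
  have e6: "\<epsilon> / 6 \<ge> 1 / b^3"
  proof -
    have "(1 / b^3)^2 = 1 / b^6" by (simp add: power_mult[symmetric] power_one_over)
    also have "\<dots> \<le> 1 / b" using b by (intro divide_left_mono) (auto intro: power_increasing[of 1 6 b, simplified])
    also have "\<dots> \<le> 2^21 / b" using b by (intro divide_right_mono) auto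
    also have "\<dots> \<le> (\<epsilon>/6)^2" using eb b by (simp add: field_simps power2_eq_square)
    finally have "(1 / b^3)^2 \<le> (\<epsilon>/6)^2" .
    moreover have "0 \<le> \<epsilon> / 6" using eps by simp
    ultimately show ?thesis by (rule power2_le_imp_le)
  qed
  have eZ: "\<epsilon> / 6 \<le> \<epsilon> / 6 * Z" using eps Z by simp
  have low: "\<epsilon>/3 * Z - b / K \<ge> \<epsilon>/6 * Z" using bK e6 eZ by linarith
  have pos6: "\<epsilon>/6 * Z > 0" using eps Z by simp
  then show "\<epsilon>/3 * Z > b / K" using low by linarith
  have num: "Z^2 / b + 3 * b^2 / K \<le> 4 * Z^2 / b"
  proof -
    have "3 * b^2 / K \<le> 3 * b^2 / b^4" using K b K0 by (intro divide_left_mono) auto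
    also have "\<dots> = 3 / b^2" using b by (simp add: power_eq_if field_simps)
    also have "\<dots> \<le> 3 / b" using b by (intro divide_left_mono) (auto simp: power2_eq_square)
    also have "\<dots> \<le> 3 * Z^2 / b" using b Z by (intro divide_right_mono) (auto simp: one_le_power)
    finally show ?thesis by (simp add: add_divide_distrib[symmetric])
  qed
  have "(Z^2 / b + 3 * b^2 / K) / (\<epsilon>/3 * Z - b / K)^2 \<le> (4 * Z^2 / b) / (\<epsilon>/6 * Z)^2"
    using num low pos6 b by (intro frac_le power_mono) auto
  also have "\<dots> = 144 / (\<epsilon>^2 * b)" using Z b eps by (simp add: field_simps power2_eq_square)
  also have "\<dots> \<le> 144 / (9 * 2^23)" using eb eps b by (intro divide_left_mono) auto
  also have "\<dots> = 1 / 2^19" by simp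
  finally show "(Z^2 / b + 3 * b^2 / K) / (\<epsilon>/3 * Z - b / K)^2 \<le> 1 / 2^19" .
qed

lemma sum_power2_minus_1_le: "(\<Sum>s<Suc S. (2::real)^s - 1) \<le> 2^(S+1) - 2"
proof (induction S)
  case 0 then show ?case by simp
next
  case (Suc S)
  have "(\<Sum>s<Suc (Suc S). (2::real)^s - 1) = (\<Sum>s<Suc S. (2::real)^s - 1) + (2^Suc S - 1)" by simp
  also have "\<dots> \<le> 2^(S+1) - 2 + (2^Suc S - 1)" using Suc by simp
  also have "\<dots> \<le> 2^(Suc S + 1) - 2" by simp
  finally show ?case .
qed


locale estimator_setting =
  fixes n :: nat and \<epsilon> :: real and A :: "nat set"
    and Pf Pg Ph :: "bit poly" and df dg dh :: nat
  assumes eps_pos: "0 < \<epsilon>" and eps_less_1: "\<epsilon> < 1"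
    and A_subset: "A \<subseteq> {..<n}" and A_nonempty: "A \<noteq> {}"
    and Pf_irr: "irreducible Pf" and Pf_deg: "degree Pf = df" and Pf_n: "2 ^ df \<ge> n"
    and Pg_irr: "irreducible Pg" and Pg_deg: "degree Pg = dg" and Pg_n: "2 ^ dg \<ge> n"
    and Pg_c: "dg \<ge> 5 + 2 * b_exp \<epsilon>"
    and Ph_irr: "irreducible Ph" and Ph_deg: "degree Ph = dh" and Ph_b: "2 ^ dh \<ge> 2 ^ 5 * b_of \<epsilon> ^ 2"
    and Ph_be: "dh \<ge> b_exp \<epsilon>"
begin

abbreviation "\<beta> \<equiv> b_exp \<epsilon>"
abbreviation "bn \<equiv> b_of \<epsilon>"
abbreviation "kk \<equiv> k_of \<epsilon>"
abbreviation "cc \<equiv> 5 + 2 * \<beta>"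
abbreviation "Fs \<equiv> seeds df 2"
abbreviation "Gs \<equiv> seeds dg 2"
abbreviation "Hs \<equiv> seeds dh kk"
abbreviation "ff fa \<equiv> hash_G Pf df fa"
abbreviation "gg ga \<equiv> hash_H Pg cc ga"
abbreviation "hh ha \<equiv> hash_H Ph \<beta> ha"
abbreviation "NN \<equiv> card A"
abbreviation "level fa s \<equiv> {a\<in>A. s \<le> ff fa a}"
abbreviation "max_level fa \<equiv> Max (ff fa ` A)"
abbreviation "occupancy z \<equiv> real bn * (1 - (1 - 1 / real bn) ^ z)"

definition L :: nat where "L = nat \<lceil>log 2 (real NN)\<rceil>"

abbreviation "s_min \<equiv> nat (int L + 3 - int \<beta>)"
abbreviation "s_max \<equiv> nat (int L + 15 - int \<beta>)"

abbreviation "level_size_bad fa s \<equiv> \<bar>real (card (level fa s)) - NN / 2 ^ s\<bar> > \<epsilon>/3 * (NN / 2 ^ s)"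

abbreviation "occupancy_bad fa ga ha s \<equiv> inj_on (gg ga) (level fa s) \<and> \<not> level_size_bad fa s \<and>
   \<bar>real (card (hh ha ` gg ga ` level fa s)) - occupancy (card (level fa s))\<bar> > \<epsilon>/3 * real (card (level fa s))"

lemma finite_A: "finite A"
  using A_subset finite_subset by blast

lemma card_A_ge_1: "NN \<ge> 1"
  using finite_A A_nonempty by (simp add: Suc_le_eq card_gt_0_iff)

lemma L_bounds: "real NN \<le> 2 ^ L" "(2::real) ^ L < 2 * NN" "\<lceil>log 2 (real NN)\<rceil> = int L"
  using ceiling_log2_bounds[OF card_A_ge_1] unfolding L_def by auto

lemma L_le_df: "L \<le> df"
proof -
  have "NN \<le> 2 ^ df" using A_subset Pf_n by (metis card_lessThan card_mono finite_lessThan order_trans)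
  then have "real NN \<le> 2 ^ df" by (metis of_nat_le_iff of_nat_numeral of_nat_power)
  then have "(2::real) ^ L < 2 * 2 ^ df" using L_bounds(2) by linarith
  then have "(2::real) ^ L < 2 ^ Suc df" by simp
  then have "L < Suc df" by (rule power_less_imp_less_exp[rotated]) simp
  then show ?thesis by simp
qed

lemma A_less_2_df: "A \<subseteq> {..<2 ^ df}" using A_subset Pf_n by auto
lemma A_less_2_dg: "A \<subseteq> {..<2 ^ dg}" using A_subset Pg_n by auto

lemma \<beta>_ge_27: "\<beta> \<ge> 27" using b_exp_bounds[OF eps_pos eps_less_1] by simp
lemma eps_sq_bn: "\<epsilon>^2 * real bn \<ge> 9 * 2^23" using b_exp_bounds[OF eps_pos eps_less_1] by simp
lemma bn_eq: "bn = 2 ^ \<beta>" by (simp add: b_of_def)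
lemma real_bn_eq: "real bn = 2 ^ \<beta>" by (simp add: bn_eq)

lemma bn_ge_8: "real bn \<ge> 8"
  using power_increasing[of 3 \<beta> "2::real"] \<beta>_ge_27 by (simp add: real_bn_eq)

lemma two_power_kk_ge: "(2::real) ^ kk \<ge> real bn ^ 4"
proof -
  have "4 * \<beta> \<le> kk" using k_of_ge_four_b_exp[OF eps_pos eps_less_1] by linarith
  then have "(2::real) ^ (4 * \<beta>) \<le> 2 ^ kk" by (intro power_increasing) auto
  then show ?thesis by (simp add: real_bn_eq power_mult[symmetric] mult.commute)
qed

lemma two_power_cc: "(2::real) ^ cc = 32 * real bn ^ 2"
  by (simp add: real_bn_eq power_add power_mult[symmetric] mult.commute)

lemma cc_le_dh: "cc \<le> dh"
proof -
  have "(2::nat) ^ cc = 2 ^ 5 * bn ^ 2" by (simp add: bn_eq power_add power_mult[symmetric] ac_simps)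
  then have "(2::nat) ^ cc \<le> 2 ^ dh" using Ph_b by simp
  then show ?thesis by simp
qed

lemma s_max_le_df: "s_max \<le> df" using L_le_df \<beta>_ge_27 by linarith

lemma card_levels_le: "card {s_min..s_max} \<le> 13" by simp

lemma level_mean_le: "s_min \<le> s \<Longrightarrow> real NN / 2 ^ s \<le> real bn / 8"
proof -
  assume "s_min \<le> s"
  then have "(2::real) ^ (L + 3) \<le> 2 ^ (s + \<beta>)" by (intro power_increasing) auto
  moreover have "(2::real) ^ (L + 3) = 8 * 2 ^ L" "(2::real) ^ (s + \<beta>) = 2 ^ s * real bn"
    by (simp_all add: power_add real_bn_eq)
  ultimately have "8 * real NN \<le> 2 ^ s * real bn" using L_bounds(1) by linarith
  then show ?thesis by (simp add: field_simps)
qed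

lemma finite_seed_spaces: "finite Fs" "finite Gs" "finite Hs" "Fs \<noteq> {}" "Gs \<noteq> {}" "Hs \<noteq> {}"
  "finite (Gs \<times> Hs)" "Gs \<times> Hs \<noteq> {}"
  by (auto simp: finite_seeds seeds_nonempty)

lemma prob_ff_ge_le:
  assumes "a \<in> A"
  shows "unif_prob Fs (\<lambda>fa. s \<le> ff fa a) \<le> 1 / 2 ^ s"
proof (cases "s \<le> df")
  case True
  then show ?thesis using prob_hash_G_ge[OF Pf_irr Pf_deg, of a s] assms A_less_2_df by auto
next
  case False
  have "unif_prob Fs (\<lambda>fa. s \<le> ff fa a) = unif_prob Fs (\<lambda>fa. False)"
  proof (intro unif_prob_cong)
    fix fa show "(s \<le> ff fa a) = False" using hash_G_le[OF Pf_irr Pf_deg, of fa a] False by simp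
  qed
  then show ?thesis by simp
qed

lemma prob_ff_ge_both:
  assumes "a \<in> A" "a' \<in> A" "s \<le> df"
  shows "unif_prob Fs (\<lambda>fa. s \<le> ff fa a \<and> s \<le> ff fa a') = (if a = a' then 1 / 2 ^ s else (1 / 2 ^ s)^2)"
  using prob_hash_G_ge[OF Pf_irr Pf_deg, of a s] prob_hash_G_ge_pair[OF Pf_irr Pf_deg, of a a' s s]
    assms A_less_2_df by (auto simp: power2_eq_square)

text \<open>Only pairwise independence of \<open>\<G>\<close> enters: the covariance of the indicators of
  two distinct elements vanishes.\<close>

lemma variance_level_size:
  assumes "s \<le> df"
  shows "unif_expect Fs (\<lambda>fa. (real (card (level fa s)) - NN / 2 ^ s)^2) = NN * (1 / 2 ^ s) * (1 - 1 / 2 ^ s)"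
proof -
  define p :: real where "p = 1 / 2 ^ s"
  define I where "I a fa = (of_bool (s \<le> ff fa a) :: real)" for a fa
  have expect_I: "unif_expect Fs (I a) = p" if "a \<in> A" for a
    using prob_hash_G_ge[OF Pf_irr Pf_deg, of a s] that assms A_less_2_df
    unfolding I_def p_def by (auto simp: unif_prob_eq_expect[symmetric] finite_seeds)
  have expect_II: "unif_expect Fs (\<lambda>fa. I a fa * I a' fa) = (if a = a' then p else p * p)"
    if "a \<in> A" "a' \<in> A" for a a'
  proof -
    have "unif_expect Fs (\<lambda>fa. I a fa * I a' fa) = unif_prob Fs (\<lambda>fa. s \<le> ff fa a \<and> s \<le> ff fa a')"
      unfolding I_def unif_prob_eq_expect[OF finite_seeds] by (intro unif_expect_cong) auto
    then show ?thesis using prob_ff_ge_both[OF that assms] unfolding p_def by (simp add: power2_eq_square)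
  qed
  have covariance: "unif_expect Fs (\<lambda>fa. (I a fa - p) * (I a' fa - p)) = (if a = a' then p - p * p else 0)"
    if "a \<in> A" "a' \<in> A" for a a'
  proof -
    have "unif_expect Fs (\<lambda>fa. (I a fa - p) * (I a' fa - p))
        = unif_expect Fs (\<lambda>fa. I a fa * I a' fa - p * I a fa - p * I a' fa + p * p)"
      by (intro unif_expect_cong) (simp add: algebra_simps)
    also have "\<dots> = unif_expect Fs (\<lambda>fa. I a fa * I a' fa) - p * unif_expect Fs (I a) - p * unif_expect Fs (I a') + p * p"
      using finite_seed_spaces
      by (simp add: unif_expect_add unif_expect_diff unif_expect_cmult unif_expect_const)
    finally show ?thesis using expect_I that expect_II[OF that] by auto
  qed
  have "(real (card (level fa s)) - NN / 2 ^ s)^2 = (\<Sum>a\<in>A. \<Sum>a'\<in>A. (I a fa - p) * (I a' fa - p))" for fa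
  proof -
    have "real (card (level fa s)) - NN / 2 ^ s = (\<Sum>a\<in>A. I a fa - p)"
      unfolding I_def p_def real_card_filter_eq_sum[OF finite_A] by (simp add: sum_subtractf)
    then show ?thesis by (simp add: power2_eq_square sum_product)
  qed
  then have "unif_expect Fs (\<lambda>fa. (real (card (level fa s)) - NN / 2 ^ s)^2)
      = (\<Sum>a\<in>A. \<Sum>a'\<in>A. unif_expect Fs (\<lambda>fa. (I a fa - p) * (I a' fa - p)))"
    by (simp add: unif_expect_sum)
  also have "\<dots> = (\<Sum>a\<in>A. p - p * p)"
    using finite_A by (simp add: covariance sum.delta cong: sum.cong)
  also have "\<dots> = NN * p * (1 - p)" by (simp add: algebra_simps)
  finally show ?thesis unfolding p_def .
qed

lemma prob_level_size_deviates:
  assumes "s \<le> df" "t > 0"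
  shows "unif_prob Fs (\<lambda>fa. \<bar>real (card (level fa s)) - NN / 2 ^ s\<bar> \<ge> t) \<le> NN * (1 / 2 ^ s) * (1 - 1 / 2 ^ s) / t^2"
  unfolding variance_level_size[OF assms(1), symmetric] by (rule unif_prob_chebyshev[OF finite_seeds assms(2)])

lemma prob_max_level_low: "unif_prob Fs (\<lambda>fa. int (max_level fa) < int L - 6) \<le> 1/32"
proof (cases "L \<le> 6")
  case True
  then have "unif_prob Fs (\<lambda>fa. int (max_level fa) < int L - 6) = unif_prob Fs (\<lambda>fa. False)"
    by (intro unif_prob_cong) auto
  then show ?thesis by simp
next
  case False
  define t where "t = L - 6"
  define \<mu> where "\<mu> = real NN / 2 ^ t"
  have "t \<le> df" "\<mu> > 0" using L_le_df card_A_ge_1 unfolding t_def \<mu>_def by auto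
  have "unif_prob Fs (\<lambda>fa. int (max_level fa) < int L - 6)
      \<le> unif_prob Fs (\<lambda>fa. \<bar>real (card (level fa t)) - NN / 2 ^ t\<bar> \<ge> \<mu>)"
  proof (rule unif_prob_mono[OF finite_seeds])
    fix fa assume "int (max_level fa) < int L - 6"
    then have "max_level fa < t" unfolding t_def using False by linarith
    moreover have "ff fa a \<le> max_level fa" if "a \<in> A" for a using finite_A that by (intro Max_ge) auto
    ultimately have "level fa t = {}" by fastforce
    then have "card (level fa t) = 0" by (simp only: card.empty)
    then show "\<bar>real (card (level fa t)) - NN / 2 ^ t\<bar> \<ge> \<mu>" unfolding \<mu>_def by simp
  qed
  also have "\<dots> \<le> NN * (1 / 2 ^ t) * (1 - 1 / 2 ^ t) / \<mu>^2"
    by (rule prob_level_size_deviates[OF \<open>t \<le> df\<close> \<open>\<mu> > 0\<close>])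
  also have "\<dots> \<le> NN * (1 / 2 ^ t) * 1 / \<mu>^2"
    by (intro divide_right_mono mult_left_mono) auto
  also have "\<dots> = 2 ^ t / NN" unfolding \<mu>_def using card_A_ge_1 by (simp add: field_simps power2_eq_square)
  also have "\<dots> \<le> 1/32"
  proof -
    have "L = t + 6" unfolding t_def using False by simp
    then have "(2::real) ^ L = 2 ^ t * 64" by (simp add: power_add)
    then show ?thesis using L_bounds(2) card_A_ge_1 by (simp add: field_simps)
  qed
  finally show ?thesis .
qed

lemma prob_max_level_high: "unif_prob Fs (\<lambda>fa. L + 7 \<le> max_level fa) \<le> 1/128"
proof -
  have "unif_prob Fs (\<lambda>fa. L + 7 \<le> max_level fa) \<le> unif_prob Fs (\<lambda>fa. \<exists>a\<in>A. L + 7 \<le> ff fa a)"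
  proof (rule unif_prob_mono[OF finite_seeds])
    fix fa assume "L + 7 \<le> max_level fa"
    moreover have "max_level fa \<in> ff fa ` A" using finite_A A_nonempty by (intro Max_in) auto
    ultimately show "\<exists>a\<in>A. L + 7 \<le> ff fa a" by auto
  qed
  also have "\<dots> \<le> (\<Sum>a\<in>A. unif_prob Fs (\<lambda>fa. L + 7 \<le> ff fa a))"
    by (rule unif_prob_union_bound[OF finite_seeds finite_A])
  also have "\<dots> \<le> (\<Sum>a\<in>A. 1 / 2 ^ (L + 7))" by (intro sum_mono prob_ff_ge_le)
  also have "\<dots> \<le> 1/128" using L_bounds(1) by (simp add: power_add field_simps)
  finally show ?thesis .
qed

lemma sum_prob_level_size_bad: "(\<Sum>s\<le>s_max. unif_prob Fs (\<lambda>fa. level_size_bad fa s)) \<le> 1/64"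
proof -
  have term_le: "unif_prob Fs (\<lambda>fa. level_size_bad fa s) \<le> 9 / (\<epsilon>^2 * NN) * (2 ^ s - 1)"
    if "s \<le> s_max" for s
  proof -
    define t where "t = \<epsilon>/3 * (NN / 2 ^ s)"
    have "s \<le> df" "t > 0" using that s_max_le_df eps_pos card_A_ge_1 unfolding t_def by auto
    have "unif_prob Fs (\<lambda>fa. level_size_bad fa s)
        \<le> unif_prob Fs (\<lambda>fa. \<bar>real (card (level fa s)) - NN / 2 ^ s\<bar> \<ge> t)"
      unfolding t_def by (intro unif_prob_mono[OF finite_seeds]) auto
    also have "\<dots> \<le> NN * (1 / 2 ^ s) * (1 - 1 / 2 ^ s) / t^2"
      by (rule prob_level_size_deviates[OF \<open>s \<le> df\<close> \<open>t > 0\<close>])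
    also have "\<dots> = 9 / (\<epsilon>^2 * NN) * (2 ^ s - 1)"
      unfolding t_def using card_A_ge_1 eps_pos by (simp add: field_simps power2_eq_square)
    finally show ?thesis .
  qed
  have "(\<Sum>s\<le>s_max. unif_prob Fs (\<lambda>fa. level_size_bad fa s)) \<le> (\<Sum>s\<le>s_max. 9 / (\<epsilon>^2 * NN) * (2 ^ s - 1))"
    using term_le by (intro sum_mono) auto
  also have "\<dots> = 9 / (\<epsilon>^2 * NN) * (\<Sum>s<Suc s_max. (2::real) ^ s - 1)"
    by (simp add: sum_distrib_left lessThan_Suc_atMost)
  also have "\<dots> \<le> 9 / (\<epsilon>^2 * NN) * (2 ^ (s_max + 1) - 2)"
    using eps_pos card_A_ge_1 by (intro mult_left_mono sum_power2_minus_1_le) auto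
  also have "\<dots> \<le> 1/64"
  proof (cases "s_max = 0")
    case False
    then have "s_max + 1 + \<beta> = L + 16" by linarith
    then have "(2::real) ^ (s_max + 1) * bn = 2 ^ L * 2 ^ 16"
      by (metis power_add real_bn_eq)
    then have bound17: "(2::real) ^ (s_max + 1) * bn \<le> 2^17 * NN" using L_bounds(2) by simp
    have "9 / (\<epsilon>^2 * NN) * (2 ^ (s_max + 1) - 2) \<le> 9 / (\<epsilon>^2 * NN) * 2 ^ (s_max + 1)"
      using eps_pos card_A_ge_1 by (intro mult_left_mono) auto
    also have "\<dots> = 9 * (2 ^ (s_max + 1) * bn) / (\<epsilon>^2 * bn * NN)"
      using card_A_ge_1 eps_pos bn_ge_8 by (simp add: field_simps)
    also have "\<dots> \<le> 9 * (2^17 * NN) / (\<epsilon>^2 * bn * NN)"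
      using bound17 eps_pos card_A_ge_1 bn_ge_8 by (intro divide_right_mono) auto
    also have "\<dots> = 9 * 2^17 / (\<epsilon>^2 * bn)" using card_A_ge_1 by simp
    also have "\<dots> \<le> 9 * 2^17 / (9 * 2^23)" using eps_sq_bn eps_pos by (intro divide_left_mono) auto
    finally show ?thesis by simp
  qed simp
  finally show ?thesis .
qed

lemma prob_not_inj:
  assumes "s_min \<le> s" "s \<le> s_max"
  shows "unif_prob (Fs \<times> Gs) (\<lambda>(fa, ga). \<not> inj_on (gg ga) (level fa s)) \<le> 1/2048"
proof -
  define Pairs where "Pairs = {p \<in> A \<times> A. fst p \<noteq> snd p}"
  have "finite Pairs" using finite_A by (simp add: Pairs_def)
  have "card Pairs \<le> card (A \<times> A)" unfolding Pairs_def using finite_A by (intro card_mono) auto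
  then have card_Pairs: "real (card Pairs) \<le> NN * NN" by (simp add: card_cartesian_product flip: of_nat_mult)
  have "unif_prob (Fs \<times> Gs) (\<lambda>(fa, ga). \<not> inj_on (gg ga) (level fa s))
      \<le> unif_prob (Fs \<times> Gs) (\<lambda>\<omega>. \<exists>p\<in>Pairs. (\<lambda>(fa, ga). (s \<le> ff fa (fst p) \<and> s \<le> ff fa (snd p))
                                            \<and> gg ga (fst p) = gg ga (snd p)) \<omega>)"
    unfolding Pairs_def inj_on_def using finite_seed_spaces
    by (intro unif_prob_mono) (auto intro!: bexI[where x="(_, _)"])
  also have "\<dots> \<le> (\<Sum>p\<in>Pairs. unif_prob (Fs \<times> Gs) (\<lambda>(fa, ga). (s \<le> ff fa (fst p) \<and> s \<le> ff fa (snd p))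
                                            \<and> gg ga (fst p) = gg ga (snd p)))"
    using finite_seed_spaces \<open>finite Pairs\<close> by (intro unif_prob_union_bound) auto
  also have "\<dots> = (\<Sum>p\<in>Pairs. (1 / 2 ^ s)^2 * (1 / 2 ^ cc))"
  proof (intro sum.cong refl)
    fix p assume "p \<in> Pairs"
    then have p: "fst p \<in> A" "snd p \<in> A" "fst p \<noteq> snd p" unfolding Pairs_def by auto
    have "unif_prob Gs (\<lambda>ga. gg ga (fst p) = gg ga (snd p)) = 1 / 2 ^ cc"
      using prob_hash_H_collision[OF Pg_irr Pg_deg, of "fst p" "snd p" cc] p A_less_2_dg Pg_c by auto
    moreover have "unif_prob Fs (\<lambda>fa. s \<le> ff fa (fst p) \<and> s \<le> ff fa (snd p)) = (1 / 2 ^ s)^2"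
      using prob_ff_ge_both[OF p(1,2)] p(3) assms(2) s_max_le_df by simp
    moreover have "unif_prob (Fs \<times> Gs) (\<lambda>(fa, ga). (s \<le> ff fa (fst p) \<and> s \<le> ff fa (snd p))
                                            \<and> gg ga (fst p) = gg ga (snd p))
        = unif_prob Fs (\<lambda>fa. s \<le> ff fa (fst p) \<and> s \<le> ff fa (snd p)) * unif_prob Gs (\<lambda>ga. gg ga (fst p) = gg ga (snd p))"
      by (rule unif_prob_times[OF finite_seeds finite_seeds])
    ultimately show "unif_prob (Fs \<times> Gs) (\<lambda>(fa, ga). (s \<le> ff fa (fst p) \<and> s \<le> ff fa (snd p))
                                            \<and> gg ga (fst p) = gg ga (snd p)) = (1 / 2 ^ s)^2 * (1 / 2 ^ cc)"
      by simp
  qed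
  also have "\<dots> = card Pairs * ((1 / 2 ^ s)^2 * (1 / 2 ^ cc))" by simp
  also have "\<dots> \<le> (NN * NN) * ((1 / 2 ^ s)^2 * (1 / 2 ^ cc))"
    using card_Pairs by (intro mult_right_mono) auto
  also have "\<dots> = (NN / 2 ^ s)^2 / (32 * real bn ^ 2)"
    unfolding two_power_cc[symmetric] by (simp add: power2_eq_square)
  also have "\<dots> \<le> (real bn / 8)^2 / (32 * real bn ^ 2)"
    using level_mean_le[OF assms(1)] by (intro divide_right_mono power_mono) auto
  also have "\<dots> = 1/2048" using bn_ge_8 by (simp add: power2_eq_square field_simps)
  finally show ?thesis .
qed

lemma prob_hh_in:
  assumes "T \<subseteq> {..<2 ^ cc}" "card T \<le> kk" "B \<subseteq> {..<bn}"
  shows "unif_prob Hs (\<lambda>ha. \<forall>x\<in>T. hh ha x \<in> B) = (real (card B) / real bn) ^ card T"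
proof -
  have "(2::nat) ^ cc \<le> 2 ^ dh" using cc_le_dh by (intro power_increasing) auto
  then have "T \<subseteq> {..<2 ^ dh}" using assms(1) by (meson lessThan_iff less_le_trans subset_iff)
  then show ?thesis
    using prob_hash_H_in[OF Ph_irr Ph_deg _ assms(2) _ Ph_be] assms(3) by (simp add: bn_eq)
qed

text \<open>Once \<open>g\<close> is injective on a level set of the right size, \<open>h\<close> throws its image into
  the bins like \<open>kk\<close>-wise independent balls.\<close>

lemma prob_occupancy_deviates:
  assumes "s_min \<le> s" and "inj_on (gg ga) (level fa s)" and "\<not> level_size_bad fa s"
  shows "unif_prob Hs (\<lambda>ha. \<bar>real (card (hh ha ` gg ga ` level fa s)) - occupancy (card (level fa s))\<bar>
           > \<epsilon>/3 * real (card (level fa s))) \<le> 1 / 2^19"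
proof -
  define S where "S = gg ga ` level fa s"
  define Z where "Z = card (level fa s)"
  define \<mu> where "\<mu> = real NN / 2 ^ s"
  have "\<mu> > 0" "\<mu> \<le> real bn / 8" unfolding \<mu>_def using card_A_ge_1 level_mean_le[OF assms(1)] by auto
  have "card S = Z" unfolding S_def Z_def using assms(2) by (simp add: card_image)
  have "\<bar>real Z - \<mu>\<bar> \<le> \<epsilon>/3 * \<mu>" using assms(3) unfolding Z_def \<mu>_def by simp
  moreover have "\<epsilon>/3 * \<mu> \<le> 1/3 * \<mu>" using eps_less_1 \<open>\<mu> > 0\<close> by (intro mult_right_mono) auto
  ultimately have "real Z \<ge> 2/3 * \<mu>" "real Z \<le> 4/3 * \<mu>"
    using abs_ge_self[of "real Z - \<mu>"] abs_ge_minus_self[of "real Z - \<mu>"] by linarith+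
  then have "Z \<ge> 1" "4 * Z \<le> bn" using \<open>\<mu> > 0\<close> \<open>\<mu> \<le> real bn / 8\<close> by auto
  have "kk \<ge> 1" using k_of_ge_four_b_exp[OF eps_pos eps_less_1] \<beta>_ge_27 by linarith
  have bound: "\<epsilon>/3 * real (card S) > real bn / 2 ^ kk"
    "(real (card S)^2 / real bn + 3 * real bn^2 / 2 ^ kk) / (\<epsilon>/3 * real (card S) - real bn / 2 ^ kk)^2
       \<le> 1 / 2^19"
    using concentration_bound_numeric[OF _ two_power_kk_ge eps_pos eps_sq_bn, of "real (card S)"]
      bn_ge_8 \<open>Z \<ge> 1\<close> \<open>card S = Z\<close> by auto
  have "S \<subseteq> {..<2 ^ cc}" unfolding S_def by (auto simp: hash_H_def)
  interpret kwise_hash_sparse Hs hh S bn kk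
  proof unfold_locales
    show "hh ha x < bn" for ha x by (simp add: hash_H_def bn_eq)
    show "unif_prob Hs (\<lambda>ha. \<forall>x\<in>T. hh ha x \<in> B) = (real (card B) / real bn) ^ card T"
      if "T \<subseteq> S" "card T \<le> kk" "B \<subseteq> {..<bn}" for T B
      using prob_hh_in[of T B] that \<open>S \<subseteq> {..<2 ^ cc}\<close> by auto
  qed (use finite_seed_spaces finite_A \<open>card S = Z\<close> \<open>Z \<ge> 1\<close> \<open>4 * Z \<le> bn\<close> \<open>kk \<ge> 1\<close>
       in \<open>auto simp: S_def\<close>)
  have "unif_prob Hs (\<lambda>ha. \<bar>real (card (hh ha ` S)) - occupancy (card S)\<bar> > \<epsilon>/3 * real (card S))
      \<le> 1 / 2^19"
    by (rule order.trans[OF card_image_concentration[where \<delta>="\<epsilon>/3", OF bound(1)] bound(2)])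
  then show ?thesis using \<open>card S = Z\<close> unfolding S_def Z_def by simp
qed

lemma prob_occupancy_bad:
  assumes "s_min \<le> s"
  shows "unif_prob (Fs \<times> Gs \<times> Hs) (\<lambda>(fa, ga, ha). occupancy_bad fa ga ha s) \<le> 1/2^19"
proof (rule unif_prob_le_if_sections_le)
  fix fa assume "fa \<in> Fs"
  show "unif_prob (Gs \<times> Hs) (\<lambda>gh. case (fa, gh) of (fa, ga, ha) \<Rightarrow> occupancy_bad fa ga ha s) \<le> 1/2^19"
  proof (rule unif_prob_le_if_sections_le)
    fix ga assume "ga \<in> Gs"
    show "unif_prob Hs (\<lambda>ha. case (fa, ga, ha) of (fa, ga, ha) \<Rightarrow> occupancy_bad fa ga ha s) \<le> 1/2^19"
    proof (cases "inj_on (gg ga) (level fa s) \<and> \<not> level_size_bad fa s")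
      case True
      then show ?thesis using prob_occupancy_deviates[OF assms] by (simp cong: unif_prob_cong)
    next
      case False
      then have "unif_prob Hs (\<lambda>ha. occupancy_bad fa ga ha s) = unif_prob Hs (\<lambda>_. False)"
        by (intro unif_prob_cong) auto
      then show ?thesis by simp
    qed
  qed (use finite_seed_spaces in auto)
qed (use finite_seed_spaces in auto)

abbreviation "estimate_bad fa ga ha \<equiv> \<exists>q::int. 0 \<le> q \<and> q \<le> q_max bn A \<and>
   \<bar>Y_c bn A (ff fa) (gg ga) (hh ha) q - ereal (real NN)\<bar> > ereal (\<epsilon> * real NN)"

text \<open>The deterministic heart of the argument: outside the five bad events the estimator
  is accurate for every admissible \<open>q\<close>.\<close>

lemma estimate_bad_cases:
  assumes "estimate_bad fa ga ha"
  shows "int (max_level fa) < int L - 6 \<or> L + 7 \<le> max_level fa \<or> (\<exists>s\<le>s_max. level_size_bad fa s)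
    \<or> (\<exists>s\<in>{s_min..s_max}. \<not> inj_on (gg ga) (level fa s))
    \<or> (\<exists>s\<in>{s_min..s_max}. occupancy_bad fa ga ha s)"
proof (rule ccontr)
  assume good: "\<not> ?thesis"
  define s where "s = nat (int (max_level fa) - int \<beta> + 9)"
  have "int (max_level fa) \<ge> int L - 6" "s \<in> {s_min..s_max}" using good unfolding s_def by auto
  then have level_ok: "\<not> level_size_bad fa s" "inj_on (gg ga) (level fa s)" "\<not> occupancy_bad fa ga ha s"
    using good by auto
  define p where "p = card (hh ha ` gg ga ` level fa s)"
  have "real p < real bn" "\<bar>2 ^ s * rho_inv bn (real p) - real NN\<bar> \<le> \<epsilon> * real NN"
    using level_estimate_accurate[of bn \<epsilon> "real NN" "2 ^ s" "real NN / 2 ^ s" "card (level fa s)" "real p"]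
      bn_ge_8 eps_pos eps_less_1 card_A_ge_1 level_mean_le \<open>s \<in> {s_min..s_max}\<close> level_ok
    unfolding p_def by auto
  moreover have "\<forall>a\<in>A. hh ha (gg ga a) < 2 ^ \<beta>" by (simp add: hash_H_def)
  ultimately have "Y_c bn A (ff fa) (gg ga) (hh ha) q = ereal (2 ^ s * rho_inv bn (real p))"
    if "0 \<le> q" "q \<le> q_max bn A" for q
    using Y_c_eq_level_estimate[of A "hh ha" "gg ga" \<beta> L "ff fa" s q] that finite_A A_nonempty
      \<beta>_ge_27 L_bounds(3) \<open>int (max_level fa) \<ge> int L - 6\<close> s_def
    unfolding p_def bn_eq by (simp add: of_nat_less_iff)
  then show False using assms \<open>\<bar>2 ^ s * rho_inv bn (real p) - real NN\<bar> \<le> \<epsilon> * real NN\<close> by auto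
qed

lemma prob_some_level_size_bad:
  "unif_prob (Fs \<times> Gs \<times> Hs) (\<lambda>(fa, ga, ha). \<exists>s\<le>s_max. level_size_bad fa s) \<le> 1/64"
proof -
  have "unif_prob (Fs \<times> Gs \<times> Hs) (\<lambda>(fa, ga, ha). \<exists>s\<le>s_max. level_size_bad fa s)
      \<le> (\<Sum>s\<le>s_max. unif_prob (Fs \<times> Gs \<times> Hs) (\<lambda>\<omega>. level_size_bad (fst \<omega>) s))"
    using unif_prob_union_bound[of "Fs \<times> Gs \<times> Hs" "{..s_max}" "\<lambda>s \<omega>. level_size_bad (fst \<omega>) s"]
      finite_seed_spaces by (simp add: case_prod_unfold atMost_iff Bex_def)
  also have "\<dots> = (\<Sum>s\<le>s_max. unif_prob Fs (\<lambda>fa. level_size_bad fa s))"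
    by (intro sum.cong refl unif_prob_fst[OF finite_seed_spaces(7,8)])
  finally show ?thesis using sum_prob_level_size_bad by linarith
qed

lemma prob_some_not_inj:
  "unif_prob (Fs \<times> Gs \<times> Hs) (\<lambda>(fa, ga, ha). \<exists>s\<in>{s_min..s_max}. \<not> inj_on (gg ga) (level fa s))
     \<le> 13 * (1/2048)"
proof -
  have "unif_prob (Fs \<times> Gs \<times> Hs) (\<lambda>(fa, ga, ha). \<exists>s\<in>{s_min..s_max}. \<not> inj_on (gg ga) (level fa s))
      \<le> (\<Sum>s\<in>{s_min..s_max}. unif_prob (Fs \<times> Gs \<times> Hs) (\<lambda>\<omega>. \<not> inj_on (gg (fst (snd \<omega>))) (level (fst \<omega>) s)))"
    using unif_prob_union_bound[of "Fs \<times> Gs \<times> Hs" "{s_min..s_max}"] finite_seed_spaces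
    by (simp add: case_prod_unfold)
  also have "\<dots> = (\<Sum>s\<in>{s_min..s_max}. unif_prob (Fs \<times> Gs) (\<lambda>(fa, ga). \<not> inj_on (gg ga) (level fa s)))"
    unfolding case_prod_unfold
    by (intro sum.cong refl unif_prob_fst_fst_snd[OF finite_seed_spaces(3,6),
          of _ _ "\<lambda>fa ga. \<not> inj_on (gg ga) (level fa _)"])
  also have "\<dots> \<le> card {s_min..s_max} * (1/2048)" using prob_not_inj by (intro sum_bounded_above) auto
  also have "\<dots> \<le> 13 * (1/2048)"
    using card_levels_le by (intro mult_right_mono) (simp_all del: card_atLeastAtMost)
  finally show ?thesis .
qed

lemma prob_some_occupancy_bad:
  "unif_prob (Fs \<times> Gs \<times> Hs) (\<lambda>(fa, ga, ha). \<exists>s\<in>{s_min..s_max}. occupancy_bad fa ga ha s) \<le> 13 * (1/2^19)"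
proof -
  have "unif_prob (Fs \<times> Gs \<times> Hs) (\<lambda>(fa, ga, ha). \<exists>s\<in>{s_min..s_max}. occupancy_bad fa ga ha s)
      \<le> (\<Sum>s\<in>{s_min..s_max}. unif_prob (Fs \<times> Gs \<times> Hs) (\<lambda>(fa, ga, ha). occupancy_bad fa ga ha s))"
    using unif_prob_union_bound[of "Fs \<times> Gs \<times> Hs" "{s_min..s_max}"] finite_seed_spaces
    by (simp add: case_prod_unfold)
  also have "\<dots> \<le> card {s_min..s_max} * (1/2^19)" using prob_occupancy_bad by (intro sum_bounded_above) auto
  also have "\<dots> \<le> 13 * (1/2^19)"
    using card_levels_le by (intro mult_right_mono) (simp_all del: card_atLeastAtMost)
  finally show ?thesis .
qed

theorem prob_estimate_bad: "unif_prob (Fs \<times> Gs \<times> Hs) (\<lambda>(fa, ga, ha). estimate_bad fa ga ha) \<le> 1/16"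
proof -
  let ?\<Omega> = "Fs \<times> Gs \<times> Hs"
  define E1 where "E1 = (\<lambda>(fa :: nat list, ga :: nat list, ha :: nat list). int (max_level fa) < int L - 6)"
  define E2 where "E2 = (\<lambda>(fa :: nat list, ga :: nat list, ha :: nat list). L + 7 \<le> max_level fa)"
  define E3 where "E3 = (\<lambda>(fa :: nat list, ga :: nat list, ha :: nat list). \<exists>s\<le>s_max. level_size_bad fa s)"
  define E4 where "E4 = (\<lambda>(fa, ga, ha :: nat list). \<exists>s\<in>{s_min..s_max}. \<not> inj_on (gg ga) (level fa s))"
  define E5 where "E5 = (\<lambda>(fa, ga, ha). \<exists>s\<in>{s_min..s_max}. occupancy_bad fa ga ha s)"
  have "finite ?\<Omega>" using finite_seed_spaces by auto
  have "unif_prob ?\<Omega> E1 \<le> 1/32"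
    using prob_max_level_low unif_prob_fst[OF finite_seed_spaces(7,8), of Fs "\<lambda>fa. int (max_level fa) < int L - 6"]
    unfolding E1_def by (simp add: case_prod_unfold)
  moreover have "unif_prob ?\<Omega> E2 \<le> 1/128"
    using prob_max_level_high unif_prob_fst[OF finite_seed_spaces(7,8), of Fs "\<lambda>fa. L + 7 \<le> max_level fa"]
    unfolding E2_def by (simp add: case_prod_unfold)
  moreover have "unif_prob ?\<Omega> (\<lambda>(fa, ga, ha). estimate_bad fa ga ha) \<le> unif_prob ?\<Omega> (\<lambda>\<omega>. E1 \<omega> \<or> E2 \<omega> \<or> E3 \<omega> \<or> E4 \<omega> \<or> E5 \<omega>)"
  proof (rule unif_prob_mono[OF \<open>finite ?\<Omega>\<close>])
    fix \<omega> :: "nat list \<times> nat list \<times> nat list"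
    assume "case \<omega> of (fa, ga, ha) \<Rightarrow> estimate_bad fa ga ha"
    then show "E1 \<omega> \<or> E2 \<omega> \<or> E3 \<omega> \<or> E4 \<omega> \<or> E5 \<omega>"
      using estimate_bad_cases unfolding E1_def E2_def E3_def E4_def E5_def by (cases \<omega>) simp
  qed
  moreover have "unif_prob ?\<Omega> E3 \<le> 1/64" "unif_prob ?\<Omega> E4 \<le> 13 * (1/2048)"
    "unif_prob ?\<Omega> E5 \<le> 13 * (1/2^19)"
    using prob_some_level_size_bad prob_some_not_inj prob_some_occupancy_bad
    unfolding E3_def E4_def E5_def by simp_all
  ultimately have "unif_prob ?\<Omega> (\<lambda>(fa, ga, ha). estimate_bad fa ga ha)
      \<le> 1/32 + 1/128 + 1/64 + 13 * (1/2048) + 13 * (1/2^19)"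
    using unif_prob_disj_le[OF \<open>finite ?\<Omega>\<close>, of E1 "\<lambda>\<omega>. E2 \<omega> \<or> E3 \<omega> \<or> E4 \<omega> \<or> E5 \<omega>"]
      unif_prob_disj_le[OF \<open>finite ?\<Omega>\<close>, of E2 "\<lambda>\<omega>. E3 \<omega> \<or> E4 \<omega> \<or> E5 \<omega>"]
      unif_prob_disj_le[OF \<open>finite ?\<Omega>\<close>, of E3 "\<lambda>\<omega>. E4 \<omega> \<or> E5 \<omega>"]
      unif_prob_disj_le[OF \<open>finite ?\<Omega>\<close>, of E4 E5]
    by linarith
  then show ?thesis by simp
qed

end

theorem lemma14:
  fixes n :: nat and \<epsilon> :: real and A :: "nat set"
    and Pf Pg Ph :: "bit poly" and df dg dh :: nat
  assumes "n \<ge> 1" and "0 < \<epsilon>" and "\<epsilon> < 1"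
    and "A \<subseteq> {..<n}" and "A \<noteq> {}"
    and "irreducible Pf" and "degree Pf = df" and "2 ^ df \<ge> n"
    and "irreducible Pg" and "degree Pg = dg" and "2 ^ dg \<ge> n"
    and "dg \<ge> 5 + 2 * b_exp \<epsilon>"
    and "irreducible Ph" and "degree Ph = dh" and "2 ^ dh \<ge> 2 ^ 5 * b_of \<epsilon> ^ 2"
    and "dh \<ge> b_exp \<epsilon>"
  shows "measure_pmf.prob
           (pmf_of_set (seeds df 2 \<times> seeds dg 2 \<times> seeds dh (k_of \<epsilon>)))
           {(fa, ga, ha).
              \<exists>q::int. 0 \<le> q \<and> q \<le> q_max (b_of \<epsilon>) A \<and>
                \<bar>Y_c (b_of \<epsilon>) A (hash_G Pf df fa) (hash_H Pg (5 + 2 * b_exp \<epsilon>) ga)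
                     (hash_H Ph (b_exp \<epsilon>) ha) q - ereal (real (card A))\<bar>
                > ereal (\<epsilon> * real (card A))}
         \<le> 1 / 16"
proof -
  interpret estimator_setting n \<epsilon> A Pf Pg Ph df dg dh
    using assms by unfold_locales auto
  have "finite (Fs \<times> Gs \<times> Hs)" "Fs \<times> Gs \<times> Hs \<noteq> {}" using finite_seed_spaces by auto
  then show ?thesis
    using prob_estimate_bad by (simp add: unif_prob_eq_measure_pmf_of_set case_prod_unfold)
qed

end
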